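(* Let $\mathcal{A}$ be a (finite) activation algebra, $O$ a finite set of objects of $\mathcal{T}_\mathcal{A}$, $S\in O$, and $M$ a set of morphisms of $\mathcal{T}_\mathcal{A}$ whose domains and codomains lie in $O$. Then the Safra automaton $\mathfrak{S}(\mathcal{A},S,M)$ accepts a sequence $\tau\in M^\omega$ if and only if $\mathrm{dom}(\tau_0)=S$ and $\tau$ describes a path through $\mathcal{T}_\mathcal{A}$ which satisfies the trace condition.
   Context: An activation algebra $\mathcal{A}=(A,\le,\vee,0,\alpha)$ is a finite join-semilattice $(A,\le,\vee)$ with least element $0$, together with a distinguished element $\alpha\in A$ with $\alpha\neq 0$. The category $\mathcal{T}_\mathcal{A}$ has the finite sets as objects; a morphism $R\colon X\to Y$ is a relation $R\subseteq X\times A\times Y$; the composite of $R\colon X\to Y$ and $R'\colon Y\to Z$ is $R'\circ R=\{(x,c,z)\mid \exists y\in Y,\ a,b\in A:\ (x,a,y)\in R,\ (y,b,z)\in R',\ a\vee b=c\}$, and the identity is $1_X=\{(x,0,x)\mid x\in X\}$. A sequence $\tau\in M^\omega$ of morphisms describes a path if $\mathrm{cod}(\tau_i)=\mathrm{dom}(\tau_{i+1})$ for all $i$; write $P(n<m)=\tau_{m-1}\circ\cdots\circ\tau_n$ for $n<m$. Such a path satisfies the trace condition if there exist a strictly increasing sequence $k_0<k_1<\cdots$ of natural numbers and elements $s_i\in\mathrm{dom}(\tau_{k_i})$ with $(s_i,\alpha,s_{i+1})\in P(k_i<k_{i+1})$ for all $i$. Safra boards. Fix a countable set $\mathcal{C}\supseteq\omega$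 of chips. A Safra board on $\mathcal{A}$ and a finite set $X$ is a pair $(\Theta,\sigma)$ where the control $\Theta\subseteq\mathcal{C}$ is a finite set with a linear order $\le$, and $\sigma\colon X\times A\to\mathcal{P}(\mathcal{P}(\Theta))$, such that every $\gamma\in\Theta$ belongs to some $S\in\sigma(x,a)$. The elements $S\in\sigma(x,a)$ are called stacks (bottom = $\le$-least, top = $\le$-greatest element). A chip $\gamma\in\Theta$ is covered if it is not the top element of any stack $S\in\sigma(x,a)$, for any $x,a$. Stacks are linearly ordered by $S<_\Theta S'$ iff $S$ contains the $\le$-least element of the symmetric difference $(S\setminus S')\cup(S'\setminus S)$. Transitions between boards: (i) $\tau$-successor, for $\tau\colon X\to Y$: first let $\sigma^*(y,a)=\{S\mid S\in\sigma(x,b)\text{ for some }x\in X,b\in A, c\in A \text{ with }(x,c,y)\in\tau\text{ and }a=b\vee c\}$ and let $\Theta^*$ be the set of chips occurring in some stack of $\sigma^*$, with the inherited order. Then choose a finite linearly ordered $\Theta^\circ\subseteq\mathcal{C}\setminus\Theta$ and a bijection $\iota$ from $\{y\in Y\mid\sigma^*(y,\alpha)\neq\emptyset\}$ onto $\Theta^\circ$, and set $\sigma'(y,\alpha)=\emptyset$, $\sigma'(y,0)=\sigma^*(y,0)\cup\{S\cup\{\iota(y)\}\mid S\in\sigma^*(y,\alpha)\}$, $\sigma'(y,a)=\sigma^*(y,a)$ for $a\notin\{0,\alpha\}$, and $\Theta'=\Theta^*\oplus\Theta^\circ$ (all elements of $\Theta^*$ below all elements of $\Theta^\circ$). (ii)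 Thinning: $\sigma'(x,a)=\{\min_{<_\Theta}\sigma(x,a)\}$ if $\sigma(x,a)\neq\emptyset$, else $\emptyset$; $\Theta'$ the chips still occurring. (iii) $\gamma$-reset for a covered $\gamma\in\Theta$: for a stack $S$ let $S{\upharpoonright}\gamma=\{z\in S\mid z\le\gamma\}$ if $\gamma\in S$ and $S{\upharpoonright}\gamma=S$ otherwise; $\sigma'(x,a)=\{S{\upharpoonright}\gamma\mid S\in\sigma(x,a)\}$, $\Theta'$ the chips still occurring. (iv) Population: $\Theta'=\Theta$, $\sigma(x,0)\subseteq\sigma'(x,0)\subseteq\sigma(x,0)\cup\{\emptyset\}$, $\sigma'(x,a)=\sigma(x,a)$ for $a\neq0$. A greedy $\tau$-transition from $(\Theta,\sigma)$ is the sequence: with $\gamma_1<\dots<\gamma_k$ all chips covered in $(\Theta,\sigma)$, perform the resets $R_{\gamma_k},\dots,R_{\gamma_1}$ in this order; then the population replacing every $\sigma(x,0)=\emptyset$ by $\{\emptyset\}$ and changing nothing else; then a $\tau$-successor step; then the thinning. $K$-sparse boards: for $K\ge|X|$ let $\overline{K}=\{n\in\omega\mid n<K\cdot(|A|+1)\}$. A board $(\Theta,\sigma)$ on $X$ is $K$-sparse if $\Theta\subseteq\overline{K}$, $|\Theta|\le K\cdot|A|$, $|\sigma(x,a)|\le1$ for all $(x,a)$, and $\sigma(x,\alpha)=\emptyset$ for all $x$. For $K\ge|X|,|Y|$, every $K$-sparse board $(\Theta,\sigma)$ on $X$ and every $\tau\colon X\to Y$ there exists a greedy $\tau$-transition $(\Theta,\sigma)=(\Theta_0,\sigma_0)\to\dots\to(\Theta_n,\sigma_n)$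 with $(\Theta_n,\sigma_n)$ $K$-sparse and $\Theta_n\cap\Theta_0=\bigcap_{i\le n}\Theta_i$; fix once and for all one such result board and denote it $g_\tau(\Theta,\sigma)$. Safra automaton. Let $K=\max_{X\in O}|X|$. $\mathfrak{S}(\mathcal{A},S,M)$ is the deterministic Rabin word automaton over the alphabet $M$ with state set $Q=\{(X,(\Theta,\sigma))\mid X\in O,\ (\Theta,\sigma)\text{ a }K\text{-sparse board on }X\}$, initial state $(S,(\emptyset,(x,a)\mapsto\emptyset))$, and partial transition function mapping state $(X,(\Theta,\sigma))$ and letter $\tau\colon X\to Y$ to $(Y,g_\tau(\Theta,\sigma))$ (undefined if $\mathrm{dom}(\tau)\neq X$). Its acceptance condition is the set of pairs $(G_\gamma,B_\gamma)$ for $\gamma\in\overline{K}$, where $G_\gamma=\{(X,(\Theta,\sigma))\in Q\mid\gamma\in\Theta,\ \gamma\text{ covered}\}$ and $B_\gamma=\{(X,(\Theta,\sigma))\in Q\mid\gamma\notin\Theta\}$. A word $\tau\in M^\omega$ is accepted iff the (unique) run on $\tau$ exists (is infinite) and for some $\gamma$ it visits $G_\gamma$ infinitely often and $B_\gamma$ only finitely often. *)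

theory Defs
  imports Main "HOL-Library.Countable"
begin

text \<open>Activation algebra: the type 'a of class finite + bounded_semilattice_sup_bot
  (join = sup, 0 = bot), together with a distinguished alpha \<noteq> bot.
  Objects of T_A: finite sets of elements of a type 'x.\<close>

type_synonym ('x,'a) morph = "'x set \<times> ('x \<times> 'a \<times> 'x) set \<times> 'x set"

definition mdom :: "('x,'a) morph \<Rightarrow> 'x set" where "mdom m = fst m"
definition mrel :: "('x,'a) morph \<Rightarrow> ('x \<times> 'a \<times> 'x) set" where "mrel m = fst (snd m)"
definition mcod :: "('x,'a) morph \<Rightarrow> 'x set" where "mcod m = snd (snd m)"

definition is_morph :: "('x,'a) morph \<Rightarrow> bool" where
  "is_morph m \<longleftrightarrow> finite (mdom m) \<and> finite (mcod m) \<and>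
     mrel m \<subseteq> mdom m \<times> (UNIV :: 'a set) \<times> mcod m"

definition rcomp :: "('x \<times> 'a::semilattice_sup \<times> 'x) set \<Rightarrow> ('x \<times> 'a \<times> 'x) set \<Rightarrow> ('x \<times> 'a \<times> 'x) set" where
  "rcomp R R' = {(x, c, z) | x c z. \<exists>y a b. (x, a, y) \<in> R \<and> (y, b, z) \<in> R' \<and> sup a b = c}"

text \<open>Composite along a path: Pp tau n d = P(n < n+d+1) = tau_(n+d) o ... o tau_n.\<close>
fun Pp :: "(nat \<Rightarrow> ('x,'a::semilattice_sup) morph) \<Rightarrow> nat \<Rightarrow> nat \<Rightarrow> ('x \<times> 'a \<times> 'x) set" where
  "Pp \<tau> n 0 = mrel (\<tau> n)"
| "Pp \<tau> n (Suc d) = rcomp (Pp \<tau> n d) (mrel (\<tau> (n + Suc d)))"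

definition Pcomp :: "(nat \<Rightarrow> ('x,'a::semilattice_sup) morph) \<Rightarrow> nat \<Rightarrow> nat \<Rightarrow> ('x \<times> 'a \<times> 'x) set" where
  "Pcomp \<tau> n m = Pp \<tau> n (m - n - 1)"   \<comment> \<open>meaningful for n < m\<close>

definition is_path :: "(nat \<Rightarrow> ('x,'a) morph) \<Rightarrow> bool" where
  "is_path \<tau> \<longleftrightarrow> (\<forall>i. mcod (\<tau> i) = mdom (\<tau> (Suc i)))"

definition trace_cond :: "'a::semilattice_sup \<Rightarrow> (nat \<Rightarrow> ('x,'a) morph) \<Rightarrow> bool" where
  "trace_cond \<alpha> \<tau> \<longleftrightarrow> (\<exists>k :: nat \<Rightarrow> nat. \<exists>s :: nat \<Rightarrow> 'x. strict_mono k \<and>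
      (\<forall>i. s i \<in> mdom (\<tau> (k i)) \<and> (s i, \<alpha>, s (Suc i)) \<in> Pcomp \<tau> (k i) (k (Suc i))))"

text \<open>The control Theta with its linear order is a distinct list of chips
  (earlier position = smaller). sigma is a function 'x \<Rightarrow> 'a \<Rightarrow> 'c set set,
  required to be empty outside the object X.\<close>

type_synonym ('c,'x,'a) board = "'c list \<times> ('x \<Rightarrow> 'a \<Rightarrow> 'c set set)"

definition chip_le :: "'c list \<Rightarrow> 'c \<Rightarrow> 'c \<Rightarrow> bool" where
  "chip_le \<Theta> a b \<longleftrightarrow> (\<exists>i j. i \<le> j \<and> j < length \<Theta> \<and> \<Theta> ! i = a \<and> \<Theta> ! j = b)"

definition occ :: "('x \<Rightarrow> 'a \<Rightarrow> 'c set set) \<Rightarrow> 'c \<Rightarrow> bool" where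
  "occ \<sigma> \<gamma> \<longleftrightarrow> (\<exists>x a S. S \<in> \<sigma> x a \<and> \<gamma> \<in> S)"

definition is_board :: "'x set \<Rightarrow> ('c,'x,'a) board \<Rightarrow> bool" where
  "is_board X b \<longleftrightarrow> distinct (fst b) \<and> (\<forall>x a. x \<notin> X \<longrightarrow> snd b x a = {}) \<and>
     (\<forall>x a S. S \<in> snd b x a \<longrightarrow> S \<subseteq> set (fst b)) \<and> (\<forall>\<gamma>\<in>set (fst b). occ (snd b) \<gamma>)"

definition is_top :: "'c list \<Rightarrow> 'c set \<Rightarrow> 'c \<Rightarrow> bool" where
  "is_top \<Theta> S \<gamma> \<longleftrightarrow> \<gamma> \<in> S \<and> (\<forall>z\<in>S. chip_le \<Theta> z \<gamma>)"

definition covered :: "('c,'x,'a) board \<Rightarrow> 'c \<Rightarrow> bool" where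
  "covered b \<gamma> \<longleftrightarrow> \<gamma> \<in> set (fst b) \<and> \<not> (\<exists>x a S. S \<in> snd b x a \<and> is_top (fst b) S \<gamma>)"

definition stack_less :: "'c list \<Rightarrow> 'c set \<Rightarrow> 'c set \<Rightarrow> bool" where
  "stack_less \<Theta> S S' \<longleftrightarrow> S \<noteq> S' \<and>
     (\<exists>d \<in> (S - S') \<union> (S' - S). d \<in> S \<and> (\<forall>e \<in> (S - S') \<union> (S' - S). chip_le \<Theta> d e))"

definition stack_min :: "'c list \<Rightarrow> 'c set set \<Rightarrow> 'c set" where
  "stack_min \<Theta> F = (THE S. S \<in> F \<and> (\<forall>S'\<in>F. S' \<noteq> S \<longrightarrow> stack_less \<Theta> S S'))"

definition thin :: "('c,'x,'a) board \<Rightarrow> ('c,'x,'a) board" where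
  "thin b = (let \<sigma>' = (\<lambda>x a. if snd b x a = {} then {} else {stack_min (fst b) (snd b x a)})
             in (filter (occ \<sigma>') (fst b), \<sigma>'))"

definition truncate :: "'c list \<Rightarrow> 'c \<Rightarrow> 'c set \<Rightarrow> 'c set" where
  "truncate \<Theta> \<gamma> S = (if \<gamma> \<in> S then {z \<in> S. chip_le \<Theta> z \<gamma>} else S)"

definition reset :: "'c \<Rightarrow> ('c,'x,'a) board \<Rightarrow> ('c,'x,'a) board" where
  "reset \<gamma> b = (let \<sigma>' = (\<lambda>x a. truncate (fst b) \<gamma> ` snd b x a)
                in (filter (occ \<sigma>') (fst b), \<sigma>'))"

definition populate :: "'x set \<Rightarrow> ('c,'x,'a::bot) board \<Rightarrow> ('c,'x,'a) board" where
  "populate X b = (fst b, \<lambda>x a. if a = bot \<and> x \<in> X \<and> snd b x a = {} then {{}} else snd b x a)"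

text \<open>(i) tau-successor, with the choice of fresh chips Theta_o (a distinct list, giving
  the order) and bijection iota.\<close>
definition sstar :: "('x \<times> 'a::semilattice_sup \<times> 'x) set \<Rightarrow> ('x \<Rightarrow> 'a \<Rightarrow> 'c set set) \<Rightarrow> 'x \<Rightarrow> 'a \<Rightarrow> 'c set set" where
  "sstar R \<sigma> y a = {S. \<exists>x b c. S \<in> \<sigma> x b \<and> (x, c, y) \<in> R \<and> a = sup b c}"

definition succ_ok :: "'a::semilattice_sup \<Rightarrow> ('x,'a) morph \<Rightarrow> ('c,'x,'a) board \<Rightarrow> 'c list \<Rightarrow> ('x \<Rightarrow> 'c) \<Rightarrow> bool" where
  "succ_ok \<alpha> m b \<Theta>o \<iota> \<longleftrightarrow> distinct \<Theta>o \<and> set \<Theta>o \<inter> set (fst b) = {} \<and>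
     bij_betw \<iota> {y \<in> mcod m. sstar (mrel m) (snd b) y \<alpha> \<noteq> {}} (set \<Theta>o)"

definition succ :: "'a::{semilattice_sup,bot} \<Rightarrow> ('x,'a) morph \<Rightarrow> ('c,'x,'a) board \<Rightarrow> 'c list \<Rightarrow> ('x \<Rightarrow> 'c) \<Rightarrow> ('c,'x,'a) board" where
  "succ \<alpha> m b \<Theta>o \<iota> = (let ss = sstar (mrel m) (snd b) in
     (filter (occ ss) (fst b) @ \<Theta>o,
      \<lambda>y a. if a = \<alpha> then {}
            else if a = bot then ss y bot \<union> {insert (\<iota> y) S | S. S \<in> ss y \<alpha>}
            else ss y a))"

fun resets :: "'c list \<Rightarrow> ('c,'x,'a) board \<Rightarrow> ('c,'x,'a) board list" where
  "resets [] b = [b]"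
| "resets (\<gamma> # \<gamma>s) b = b # resets \<gamma>s (reset \<gamma> b)"

definition Kbar :: "(nat \<Rightarrow> 'c) \<Rightarrow> nat \<Rightarrow> nat \<Rightarrow> 'c set" where
  "Kbar ch K N = ch ` {n. n < K * (N + 1)}"   \<comment> \<open>N = |A|\<close>

definition ksparse :: "'a::finite \<Rightarrow> (nat \<Rightarrow> 'c) \<Rightarrow> nat \<Rightarrow> 'x set \<Rightarrow> ('c,'x,'a) board \<Rightarrow> bool" where
  "ksparse \<alpha> ch K X b \<longleftrightarrow> is_board X b \<and> set (fst b) \<subseteq> Kbar ch K (card (UNIV :: 'a set)) \<and>
     length (fst b) \<le> K * card (UNIV :: 'a set) \<and> (\<forall>x a. card (snd b x a) \<le> 1) \<and> (\<forall>x. snd b x \<alpha> = {})"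

definition greedy_result :: "'a::{finite,bounded_semilattice_sup_bot} \<Rightarrow> (nat \<Rightarrow> 'c) \<Rightarrow> nat \<Rightarrow> ('x,'a) morph
    \<Rightarrow> ('c,'x,'a) board \<Rightarrow> ('c,'x,'a) board \<Rightarrow> bool" where
  "greedy_result \<alpha> ch K m b b' \<longleftrightarrow> (\<exists>\<Theta>o \<iota>.
     let rs = resets (rev (filter (covered b) (fst b))) b;
         b2 = populate (mdom m) (last rs);
         b3 = succ \<alpha> m b2 \<Theta>o \<iota>;
         b4 = thin b3
     in succ_ok \<alpha> m b2 \<Theta>o \<iota> \<and> b' = b4 \<and> ksparse \<alpha> ch K (mcod m) b4 \<and>
        set (fst b4) \<inter> set (fst b) = (\<Inter>bb \<in> set (rs @ [b2, b3, b4]). set (fst bb)))"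

definition safraK :: "'x set set \<Rightarrow> nat" where
  "safraK Ob = Max (card ` Ob)"

definition safra_choice :: "'a::{finite,bounded_semilattice_sup_bot} \<Rightarrow> (nat \<Rightarrow> 'c) \<Rightarrow> 'x set set
    \<Rightarrow> ('x,'a) morph set \<Rightarrow> (('x,'a) morph \<Rightarrow> ('c,'x,'a) board \<Rightarrow> ('c,'x,'a) board) \<Rightarrow> bool" where
  "safra_choice \<alpha> ch Ob M g \<longleftrightarrow> (\<forall>m\<in>M. \<forall>b. ksparse \<alpha> ch (safraK Ob) (mdom m) b \<longrightarrow>
      greedy_result \<alpha> ch (safraK Ob) m b (g m b))"

fun safra_run :: "'x set \<Rightarrow> (('x,'a) morph \<Rightarrow> ('c,'x,'a) board \<Rightarrow> ('c,'x,'a) board)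
    \<Rightarrow> (nat \<Rightarrow> ('x,'a) morph) \<Rightarrow> nat \<Rightarrow> 'x set \<times> ('c,'x,'a) board" where
  "safra_run S g \<tau> 0 = (S, ([], \<lambda>x a. {}))"
| "safra_run S g \<tau> (Suc n) = (mcod (\<tau> n), g (\<tau> n) (snd (safra_run S g \<tau> n)))"

definition safra_accepts :: "'a::{finite,bounded_semilattice_sup_bot} \<Rightarrow> (nat \<Rightarrow> 'c) \<Rightarrow> 'x set set \<Rightarrow> 'x set
    \<Rightarrow> (('x,'a) morph \<Rightarrow> ('c,'x,'a) board \<Rightarrow> ('c,'x,'a) board) \<Rightarrow> (nat \<Rightarrow> ('x,'a) morph) \<Rightarrow> bool" where
  "safra_accepts \<alpha> ch Ob S g \<tau> \<longleftrightarrow>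
     (\<forall>n. mdom (\<tau> n) = fst (safra_run S g \<tau> n)) \<and>
     (\<exists>\<gamma> \<in> Kbar ch (safraK Ob) (card (UNIV :: 'a set)).
        infinite {n. covered (snd (safra_run S g \<tau> n)) \<gamma>} \<and>
        finite {n. \<gamma> \<notin> set (fst (snd (safra_run S g \<tau> n)))})"

end

theory Submission
  imports Defs "HOL-Library.Infinite_Set"
begin

section \<open>The order of chips and the order of stacks\<close>

lemma chip_le_iff_split: "chip_le \<Theta> a b \<longleftrightarrow> (\<exists>us vs. \<Theta> = us @ a # vs \<and> b \<in> set (a # vs))"
proof
  assume "chip_le \<Theta> a b"
  then obtain i j where ij: "i \<le> j" "j < length \<Theta>" "\<Theta> ! i = a" "\<Theta> ! j = b"
    unfolding chip_le_def by blast
  have i: "i < length \<Theta>" using ij by simp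
  have d: "drop i \<Theta> = a # drop (Suc i) \<Theta>" using i ij(3) by (metis Cons_nth_drop_Suc)
  have "\<Theta> = take i \<Theta> @ a # drop (Suc i) \<Theta>" using d by (metis append_take_drop_id)
  moreover have "b \<in> set (drop i \<Theta>)"
  proof -
    have "drop i \<Theta> ! (j - i) = b" using ij i by simp
    moreover have "j - i < length (drop i \<Theta>)" using ij by simp
    ultimately show ?thesis by (metis nth_mem)
  qed
  moreover note d
  ultimately show "\<exists>us vs. \<Theta> = us @ a # vs \<and> b \<in> set (a # vs)" by metis
next
  assume "\<exists>us vs. \<Theta> = us @ a # vs \<and> b \<in> set (a # vs)"
  then obtain us vs where h: "\<Theta> = us @ a # vs" "b \<in> set (a # vs)" by blast
  then obtain k where k: "k < length (a # vs)" "(a # vs) ! k = b" by (meson in_set_conv_nth)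
  show "chip_le \<Theta> a b" unfolding chip_le_def
    apply (rule exI[of _ "length us"], rule exI[of _ "length us + k"])
    using h k by (auto simp: nth_append)
qed

lemma chip_le_mem: "chip_le \<Theta> a b \<Longrightarrow> a \<in> set \<Theta> \<and> b \<in> set \<Theta>"
  unfolding chip_le_iff_split by auto

lemma chip_le_refl: "a \<in> set \<Theta> \<Longrightarrow> chip_le \<Theta> a a"
  unfolding chip_le_iff_split by (meson list.set_intros(1) split_list)

lemma chip_le_total: "a \<in> set \<Theta> \<Longrightarrow> b \<in> set \<Theta> \<Longrightarrow> chip_le \<Theta> a b \<or> chip_le \<Theta> b a"
proof -
  assume "a \<in> set \<Theta>" "b \<in> set \<Theta>"
  then obtain i j where "i < length \<Theta>" "\<Theta> ! i = a" "j < length \<Theta>" "\<Theta> ! j = b"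
    by (meson in_set_conv_nth)
  then show ?thesis unfolding chip_le_def by (cases "i \<le> j") (blast, force)
qed

lemma chip_le_antisym: "distinct \<Theta> \<Longrightarrow> chip_le \<Theta> a b \<Longrightarrow> chip_le \<Theta> b a \<Longrightarrow> a = b"
proof -
  assume d: "distinct \<Theta>" and h1: "chip_le \<Theta> a b" and h2: "chip_le \<Theta> b a"
  obtain i j where ij: "i \<le> j" "j < length \<Theta>" "\<Theta> ! i = a" "\<Theta> ! j = b"
    using h1 unfolding chip_le_def by blast
  obtain i' j' where ij': "i' \<le> j'" "j' < length \<Theta>" "\<Theta> ! i' = b" "\<Theta> ! j' = a"
    using h2 unfolding chip_le_def by blast
  have "j = i'" using nth_eq_iff_index_eq[OF d, of j i'] ij ij' by simp
  moreover have "j' = i" using nth_eq_iff_index_eq[OF d, of j' i] ij ij' by simp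
  ultimately have "i = j" using ij ij' by simp
  then show "a = b" using ij by simp
qed

lemma chip_le_trans: "distinct \<Theta> \<Longrightarrow> chip_le \<Theta> a b \<Longrightarrow> chip_le \<Theta> b c \<Longrightarrow> chip_le \<Theta> a c"
proof -
  assume d: "distinct \<Theta>" and h1: "chip_le \<Theta> a b" and h2: "chip_le \<Theta> b c"
  obtain i j where ij: "i \<le> j" "j < length \<Theta>" "\<Theta> ! i = a" "\<Theta> ! j = b"
    using h1 unfolding chip_le_def by blast
  obtain i' j' where ij': "i' \<le> j'" "j' < length \<Theta>" "\<Theta> ! i' = b" "\<Theta> ! j' = c"
    using h2 unfolding chip_le_def by blast
  have "j = i'" using nth_eq_iff_index_eq[OF d, of j i'] ij ij' by simp
  then show ?thesis unfolding chip_le_def using ij ij' by (intro exI[of _ i] exI[of _ j']) auto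
qed

lemma chip_le_transfer:
  assumes "distinct \<Theta>'" "a \<in> set \<Theta>" "b \<in> set \<Theta>"
    and mono: "\<And>x y. x \<in> {a,b} \<Longrightarrow> y \<in> {a,b} \<Longrightarrow> chip_le \<Theta> x y \<Longrightarrow> chip_le \<Theta>' x y"
  shows "chip_le \<Theta>' a b \<longleftrightarrow> chip_le \<Theta> a b"
  using chip_le_total[OF assms(2,3)] chip_le_antisym[OF assms(1)] chip_le_refl[OF assms(2)] mono
  by blast

lemma chip_le_filter:
  assumes "distinct \<Theta>" "P a" "P b"
  shows "chip_le (filter P \<Theta>) a b \<longleftrightarrow> chip_le \<Theta> a b"
proof (cases "a \<in> set \<Theta> \<and> b \<in> set \<Theta>")
  case True
  show ?thesis
  proof (rule chip_le_transfer)
    fix x y assume xy: "x \<in> {a,b}" "y \<in> {a,b}" "chip_le \<Theta> x y"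
    then obtain us vs where "\<Theta> = us @ x # vs" "y \<in> set (x # vs)" unfolding chip_le_iff_split by blast
    with xy assms show "chip_le (filter P \<Theta>) x y" unfolding chip_le_iff_split
      by (intro exI[of _ "filter P us"] exI[of _ "filter P vs"]) auto
  qed (use True assms in auto)
next
  case False
  then show ?thesis using chip_le_mem by (metis filter_is_subset subsetD)
qed

lemma chip_le_append_left:
  assumes "distinct (\<Theta> @ \<Theta>')" "a \<in> set \<Theta>" "b \<in> set \<Theta>"
  shows "chip_le (\<Theta> @ \<Theta>') a b \<longleftrightarrow> chip_le \<Theta> a b"
proof (rule chip_le_transfer)
  fix x y assume "chip_le \<Theta> x y"
  then obtain us vs where "\<Theta> = us @ x # vs" "y \<in> set (x # vs)" unfolding chip_le_iff_split by blast
  then show "chip_le (\<Theta> @ \<Theta>') x y" unfolding chip_le_iff_split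
    by (intro exI[of _ us] exI[of _ "vs @ \<Theta>'"]) auto
qed (use assms in auto)

lemma chip_le_append:
  assumes "a \<in> set \<Theta>" "b \<in> set \<Theta>'"
  shows "chip_le (\<Theta> @ \<Theta>') a b"
proof -
  obtain us vs where "\<Theta> = us @ a # vs" using assms by (meson split_list)
  then show ?thesis unfolding chip_le_iff_split
    by (intro exI[of _ us] exI[of _ "vs @ \<Theta>'"]) (use assms in auto)
qed

lemma not_chip_le_append:
  "distinct (\<Theta> @ \<Theta>') \<Longrightarrow> a \<in> set \<Theta>' \<Longrightarrow> b \<in> set \<Theta> \<Longrightarrow> \<not> chip_le (\<Theta> @ \<Theta>') a b"
  using chip_le_append[of b \<Theta> a \<Theta>'] chip_le_antisym[of "\<Theta> @ \<Theta>'" a b] by auto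

lemma chip_le_least_exists:
  assumes "finite D" "D \<noteq> {}" "D \<subseteq> set \<Theta>" "distinct \<Theta>"
  shows "\<exists>d\<in>D. \<forall>e\<in>D. chip_le \<Theta> d e"
  using assms
proof (induction D rule: finite_ne_induct)
  case (singleton x) then show ?case using chip_le_refl by auto
next
  case (insert x F)
  then obtain d where d: "d \<in> F" "\<forall>e\<in>F. chip_le \<Theta> d e" by auto
  show ?case
  proof (cases "chip_le \<Theta> x d")
    case True
    then have "\<forall>e\<in>insert x F. chip_le \<Theta> x e"
      using d insert.prems chip_le_refl chip_le_trans by (metis insert_iff insert_subset)
    then show ?thesis by blast
  next
    case False
    then have "chip_le \<Theta> d x" using chip_le_total insert d by (meson insert_subset subsetD)
    then show ?thesis using d by auto
  qed
qed

lemma stack_less_iff: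
  assumes "distinct \<Theta>" "S \<subseteq> set \<Theta>" "S' \<subseteq> set \<Theta>"
  shows "stack_less \<Theta> S S' \<longleftrightarrow>
    (\<exists>d\<in>S. d \<notin> S' \<and> (\<forall>z. chip_le \<Theta> z d \<and> z \<noteq> d \<longrightarrow> (z \<in> S \<longleftrightarrow> z \<in> S')))"
proof
  assume "stack_less \<Theta> S S'"
  then obtain d where d: "d \<in> S" "d \<notin> S'" "\<forall>e \<in> (S - S') \<union> (S' - S). chip_le \<Theta> d e"
    unfolding stack_less_def by blast
  have "z \<in> S \<longleftrightarrow> z \<in> S'" if "chip_le \<Theta> z d" "z \<noteq> d" for z
    using d(3) that chip_le_antisym[OF assms(1)] by blast
  then show "\<exists>d\<in>S. d \<notin> S' \<and> (\<forall>z. chip_le \<Theta> z d \<and> z \<noteq> d \<longrightarrow> (z \<in> S \<longleftrightarrow> z \<in> S'))"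
    using d by blast
next
  assume "\<exists>d\<in>S. d \<notin> S' \<and> (\<forall>z. chip_le \<Theta> z d \<and> z \<noteq> d \<longrightarrow> (z \<in> S \<longleftrightarrow> z \<in> S'))"
  then obtain d where d: "d \<in> S" "d \<notin> S'" "\<forall>z. chip_le \<Theta> z d \<and> z \<noteq> d \<longrightarrow> (z \<in> S \<longleftrightarrow> z \<in> S')"
    by blast
  have "chip_le \<Theta> d e" if "e \<in> (S - S') \<union> (S' - S)" for e
    using that d assms chip_le_total[of d \<Theta> e] chip_le_refl[of d \<Theta>] by blast
  then show "stack_less \<Theta> S S'" unfolding stack_less_def using d by blast
qed

lemma stack_less_asym:
  assumes "distinct \<Theta>" "stack_less \<Theta> S S'" shows "\<not> stack_less \<Theta> S' S"
proof
  assume "stack_less \<Theta> S' S"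
  then obtain d' where d': "d' \<in> (S' - S) \<union> (S - S')" "d' \<in> S'"
     "\<forall>e \<in> (S' - S) \<union> (S - S'). chip_le \<Theta> d' e" unfolding stack_less_def by blast
  obtain d where d: "d \<in> (S - S') \<union> (S' - S)" "d \<in> S"
     "\<forall>e \<in> (S - S') \<union> (S' - S). chip_le \<Theta> d e" using assms unfolding stack_less_def by blast
  have "chip_le \<Theta> d d'" using d d' by blast
  moreover have "chip_le \<Theta> d' d" using d d' by blast
  ultimately have "d = d'" using chip_le_antisym[OF assms(1)] by blast
  then show False using d d' by auto
qed

lemma stack_less_total:
  assumes "distinct \<Theta>" "S \<subseteq> set \<Theta>" "S' \<subseteq> set \<Theta>" "S \<noteq> S'"
  shows "stack_less \<Theta> S S' \<or> stack_less \<Theta> S' S"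
proof -
  let ?D = "(S - S') \<union> (S' - S)"
  have D: "?D \<subseteq> set \<Theta>" using assms by blast
  obtain d where d: "d \<in> ?D" "\<forall>e\<in>?D. chip_le \<Theta> d e"
    using chip_le_least_exists[OF finite_subset[OF D] _ D assms(1)] assms(4) by blast
  have sym: "(S' - S) \<union> (S - S') = ?D" by blast
  show ?thesis
  proof (cases "d \<in> S")
    case True
    then show ?thesis unfolding stack_less_def using assms(4) d by blast
  next
    case False
    then show ?thesis unfolding stack_less_def sym using assms(4) d by blast
  qed
qed

lemma stack_less_trans:
  assumes \<Theta>: "distinct \<Theta>" and S: "S1 \<subseteq> set \<Theta>" "S2 \<subseteq> set \<Theta>" "S3 \<subseteq> set \<Theta>"
    and "stack_less \<Theta> S1 S2" "stack_less \<Theta> S2 S3"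
  shows "stack_less \<Theta> S1 S3"
proof -
  obtain d1 where d1: "d1 \<in> S1" "d1 \<notin> S2" "\<forall>z. chip_le \<Theta> z d1 \<and> z \<noteq> d1 \<longrightarrow> (z \<in> S1 \<longleftrightarrow> z \<in> S2)"
    using assms(5) unfolding stack_less_iff[OF \<Theta> S(1,2)] by blast
  obtain d2 where d2: "d2 \<in> S2" "d2 \<notin> S3" "\<forall>z. chip_le \<Theta> z d2 \<and> z \<noteq> d2 \<longrightarrow> (z \<in> S2 \<longleftrightarrow> z \<in> S3)"
    using assms(6) unfolding stack_less_iff[OF \<Theta> S(2,3)] by blast
  have ne: "d1 \<noteq> d2" using d1(2) d2(1) by auto
  have agree: "z \<in> S1 \<longleftrightarrow> z \<in> S3"
    if z: "chip_le \<Theta> z d" "z \<noteq> d" and d: "d = d1 \<or> d = d2" "chip_le \<Theta> d d1" "chip_le \<Theta> d d2"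
    for z d
  proof -
    have le: "chip_le \<Theta> z d1" "chip_le \<Theta> z d2"
      using chip_le_trans[OF \<Theta> z(1) d(2)] chip_le_trans[OF \<Theta> z(1) d(3)] .
    have "z \<noteq> d1" using z chip_le_antisym[OF \<Theta> d(2)] by auto
    moreover have "z \<noteq> d2" using z chip_le_antisym[OF \<Theta> d(3)] by auto
    ultimately
    show ?thesis using le d1(3)[rule_format, of z] d2(3)[rule_format, of z] by blast
  qed
  have "\<exists>d\<in>S1. d \<notin> S3 \<and> (\<forall>z. chip_le \<Theta> z d \<and> z \<noteq> d \<longrightarrow> (z \<in> S1 \<longleftrightarrow> z \<in> S3))"
  proof (cases "chip_le \<Theta> d1 d2")
    case True
    have d1_le: "chip_le \<Theta> d1 d1" by (rule chip_le_refl) (use d1(1) S(1) in blast)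
    have "d1 \<notin> S3" using d2(3)[rule_format, of d1] d1(2) True ne by blast
    moreover have "\<forall>z. chip_le \<Theta> z d1 \<and> z \<noteq> d1 \<longrightarrow> (z \<in> S1 \<longleftrightarrow> z \<in> S3)"
      using agree[of _ d1, OF _ _ disjI1[OF refl] d1_le True] by blast
    ultimately show ?thesis using d1(1) by blast
  next
    case False
    then have le: "chip_le \<Theta> d2 d1" using chip_le_total[of d1 \<Theta> d2] d1(1) d2(1) S(1,2) by blast
    have d2_le: "chip_le \<Theta> d2 d2" by (rule chip_le_refl) (use d2(1) S(2) in blast)
    have "d2 \<in> S1" using d1(3)[rule_format, of d2] d2(1) le ne by blast
    moreover have "\<forall>z. chip_le \<Theta> z d2 \<and> z \<noteq> d2 \<longrightarrow> (z \<in> S1 \<longleftrightarrow> z \<in> S3)"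
      using agree[of _ d2, OF _ _ disjI2[OF refl] le d2_le] by blast
    ultimately show ?thesis using d2(2) by blast
  qed
  then show ?thesis unfolding stack_less_iff[OF \<Theta> S(1,3)] .
qed

lemma stack_less_least_exists:
  assumes "finite F" "F \<noteq> {}" "\<forall>S\<in>F. S \<subseteq> set \<Theta>" "distinct \<Theta>"
  shows "\<exists>S\<in>F. \<forall>S'\<in>F. S' \<noteq> S \<longrightarrow> stack_less \<Theta> S S'"
  using assms
proof (induction F rule: finite_ne_induct)
  case (insert x F)
  have subF: "\<forall>S'\<in>F. S' \<subseteq> set \<Theta>" using insert.prems by simp
  obtain S where S: "S \<in> F" "\<forall>S'\<in>F. S' \<noteq> S \<longrightarrow> stack_less \<Theta> S S'"
    using insert.IH[OF subF assms(4)] by blast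
  have sub: "x \<subseteq> set \<Theta>" "S \<subseteq> set \<Theta>" using insert.prems S(1) by auto
  show ?case
  proof (cases "stack_less \<Theta> x S")
    case True
    have "stack_less \<Theta> x S'" if "S' \<in> F" "S' \<noteq> S" for S'
      by (rule stack_less_trans[OF assms(4) sub _ True]) (use subF S(2) that in auto)
    then show ?thesis using True by blast
  next
    case False
    then have "stack_less \<Theta> S x"
      using stack_less_total[OF assms(4) sub(2,1)] insert.hyps S(1) by blast
    then show ?thesis using S by blast
  qed
qed auto

lemma stack_min_spec:
  assumes "finite F" "F \<noteq> {}" "\<forall>S\<in>F. S \<subseteq> set \<Theta>" "distinct \<Theta>"
  shows "stack_min \<Theta> F \<in> F \<and> (\<forall>S'\<in>F. S' \<noteq> stack_min \<Theta> F \<longrightarrow> stack_less \<Theta> (stack_min \<Theta> F) S')"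
proof -
  obtain S where S: "S \<in> F" "\<forall>S'\<in>F. S' \<noteq> S \<longrightarrow> stack_less \<Theta> S S'"
    using stack_less_least_exists[OF assms] by blast
  have "stack_min \<Theta> F = S" unfolding stack_min_def
  proof (rule the_equality)
    fix T assume T: "T \<in> F \<and> (\<forall>S'\<in>F. S' \<noteq> T \<longrightarrow> stack_less \<Theta> T S')"
    show "T = S"
    proof (rule ccontr)
      assume "T \<noteq> S"
      then have "stack_less \<Theta> T S" "stack_less \<Theta> S T" using S T by auto
      then show False using stack_less_asym[OF assms(4)] by blast
    qed
  qed (use S in auto)
  then show ?thesis using S by simp
qed

section \<open>Resets\<close>

definition truncate_all :: "'c list \<Rightarrow> 'c list \<Rightarrow> 'c set \<Rightarrow> 'c set" where
  "truncate_all \<Theta> cs S = fold (truncate \<Theta>) cs S"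

lemma truncate_subset: "truncate \<Theta> \<gamma> S \<subseteq> S"
  unfolding truncate_def by auto

lemma truncate_all_Nil [simp]: "truncate_all \<Theta> [] S = S"
  unfolding truncate_all_def by simp

lemma truncate_all_Cons: "truncate_all \<Theta> (\<gamma> # cs) S = truncate_all \<Theta> cs (truncate \<Theta> \<gamma> S)"
  unfolding truncate_all_def by simp

lemma truncate_all_subset: "truncate_all \<Theta> cs S \<subseteq> S"
proof (induction cs arbitrary: S)
  case (Cons \<gamma> cs)
  then show ?case unfolding truncate_all_Cons using truncate_subset by (metis subset_trans)
qed simp

lemma truncate_all_keeps:
  "C \<subseteq> S \<Longrightarrow> (\<forall>\<epsilon>\<in>set cs. \<epsilon> \<in> S \<longrightarrow> (\<forall>c\<in>C. chip_le \<Theta> c \<epsilon>)) \<Longrightarrow> C \<subseteq> truncate_all \<Theta> cs S"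
proof (induction cs arbitrary: S)
  case (Cons \<epsilon> cs)
  have "C \<subseteq> truncate \<Theta> \<epsilon> S"
    using Cons.prems unfolding truncate_def by auto
  moreover have "\<forall>\<epsilon>'\<in>set cs. \<epsilon>' \<in> truncate \<Theta> \<epsilon> S \<longrightarrow> (\<forall>c\<in>C. chip_le \<Theta> c \<epsilon>')"
    using Cons.prems(2) truncate_subset by (metis list.set_intros(2) subsetD)
  ultimately show ?case unfolding truncate_all_Cons by (rule Cons.IH)
qed simp

lemma truncate_all_below:
  "\<gamma> \<in> set cs \<Longrightarrow> \<gamma> \<in> truncate_all \<Theta> cs S \<Longrightarrow> z \<in> truncate_all \<Theta> cs S \<Longrightarrow> chip_le \<Theta> z \<gamma>"
proof (induction cs arbitrary: S)
  case (Cons \<epsilon> cs)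
  show ?case
  proof (cases "\<gamma> = \<epsilon>")
    case True
    have "truncate_all \<Theta> cs (truncate \<Theta> \<gamma> S) \<subseteq> truncate \<Theta> \<gamma> S" by (rule truncate_all_subset)
    then have "\<gamma> \<in> truncate \<Theta> \<gamma> S" "z \<in> truncate \<Theta> \<gamma> S"
      using Cons.prems(2,3) True unfolding truncate_all_Cons by blast+
    then show ?thesis unfolding truncate_def by (auto split: if_splits)
  next
    case False
    then show ?thesis using Cons unfolding truncate_all_Cons by simp
  qed
qed simp

definition trim :: "'c list \<Rightarrow> ('x \<Rightarrow> 'a \<Rightarrow> 'c set set) \<Rightarrow> ('c,'x,'a) board" where
  "trim \<Theta> \<sigma> = (filter (occ \<sigma>) \<Theta>, \<sigma>)"

lemma truncate_filter:
  assumes "distinct \<Theta>" "S \<subseteq> set (filter P \<Theta>)"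
  shows "truncate (filter P \<Theta>) \<gamma> S = truncate \<Theta> \<gamma> S"
proof (cases "\<gamma> \<in> S")
  case True
  then have "chip_le (filter P \<Theta>) z \<gamma> \<longleftrightarrow> chip_le \<Theta> z \<gamma>" if "z \<in> S" for z
    using that assms chip_le_filter[OF assms(1), of P z \<gamma>] by auto
  then show ?thesis unfolding truncate_def by auto
qed (simp add: truncate_def)

lemma occ_image_subset: "occ (\<lambda>x a. f ` \<sigma> x a) z \<Longrightarrow> (\<And>S. f S \<subseteq> S) \<Longrightarrow> occ \<sigma> z"
  unfolding occ_def by blast

lemma reset_trim:
  assumes "distinct \<Theta>" "\<And>x a S. S \<in> \<sigma> x a \<Longrightarrow> S \<subseteq> set \<Theta>"
  shows "reset \<gamma> (trim \<Theta> \<sigma>) = trim \<Theta> (\<lambda>x a. truncate \<Theta> \<gamma> ` \<sigma> x a)"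
proof -
  have "S \<subseteq> set (filter (occ \<sigma>) \<Theta>)" if "S \<in> \<sigma> x a" for x a S
    using that assms(2) unfolding occ_def by fastforce
  then have stacks: "(\<lambda>x a. truncate (filter (occ \<sigma>) \<Theta>) \<gamma> ` \<sigma> x a) = (\<lambda>x a. truncate \<Theta> \<gamma> ` \<sigma> x a)"
    using truncate_filter[OF assms(1)] by (intro ext image_cong) auto
  have "filter (occ (\<lambda>x a. truncate \<Theta> \<gamma> ` \<sigma> x a)) (filter (occ \<sigma>) \<Theta>)
      = filter (occ (\<lambda>x a. truncate \<Theta> \<gamma> ` \<sigma> x a)) \<Theta>"
    unfolding filter_filter
    using occ_image_subset[where f="truncate \<Theta> \<gamma>", OF _ truncate_subset] by (intro filter_cong) blast+
  then show ?thesis unfolding reset_def trim_def Let_def using stacks by simp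
qed

lemma last_resets_trim:
  assumes "distinct \<Theta>" "\<And>x a S. S \<in> \<sigma> x a \<Longrightarrow> S \<subseteq> set \<Theta>"
  shows "last (resets cs (trim \<Theta> \<sigma>)) = trim \<Theta> (\<lambda>x a. truncate_all \<Theta> cs ` \<sigma> x a)"
  using assms(2)
proof (induction cs arbitrary: \<sigma>)
  case (Cons \<gamma> cs)
  define \<sigma>1 where "\<sigma>1 = (\<lambda>x a. truncate \<Theta> \<gamma> ` \<sigma> x a)"
  have "S \<subseteq> set \<Theta>" if S: "S \<in> \<sigma>1 x a" for x a S
  proof -
    obtain S0 where "S0 \<in> \<sigma> x a" "S = truncate \<Theta> \<gamma> S0" using S unfolding \<sigma>1_def by blast
    then show ?thesis using Cons.prems[of S0 x a] truncate_subset[of \<Theta> \<gamma> S0] by blast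
  qed
  then have "last (resets cs (trim \<Theta> \<sigma>1)) = trim \<Theta> (\<lambda>x a. truncate_all \<Theta> cs ` \<sigma>1 x a)"
    by (rule Cons.IH)
  moreover have "reset \<gamma> (trim \<Theta> \<sigma>) = trim \<Theta> \<sigma>1"
    unfolding \<sigma>1_def using reset_trim[OF assms(1), of \<sigma> \<gamma>] Cons.prems by blast
  moreover have "resets cs (trim \<Theta> \<sigma>1) \<noteq> []" by (cases cs) auto
  moreover have "(\<lambda>x a. truncate_all \<Theta> cs ` \<sigma>1 x a) = (\<lambda>x a. truncate_all \<Theta> (\<gamma> # cs) ` \<sigma> x a)"
    unfolding \<sigma>1_def truncate_all_Cons by (simp add: image_image)
  ultimately show ?case by simp
qed simp

section \<open>Anatomy of a greedy transition\<close>

definition covered_chips :: "('c,'x,'a) board \<Rightarrow> 'c list" where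
  "covered_chips b = rev (filter (covered b) (fst b))"

definition reset_all :: "('c,'x,'a) board \<Rightarrow> 'c set \<Rightarrow> 'c set" where
  "reset_all b = truncate_all (fst b) (covered_chips b)"

lemma reset_all_subset: "reset_all b S \<subseteq> S"
  unfolding reset_all_def by (rule truncate_all_subset)

definition reset_stacks :: "('c,'x,'a) board \<Rightarrow> 'x \<Rightarrow> 'a \<Rightarrow> 'c set set" where
  "reset_stacks b = (\<lambda>x a. reset_all b ` snd b x a)"

definition populated_stacks :: "'x set \<Rightarrow> ('c,'x,'a::bot) board \<Rightarrow> 'x \<Rightarrow> 'a \<Rightarrow> 'c set set" where
  "populated_stacks X b = (\<lambda>x a. if a = bot \<and> x \<in> X \<and> reset_stacks b x a = {} then {{}} else reset_stacks b x a)"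

definition arriving_stacks :: "('x,'a::{semilattice_sup,bot}) morph \<Rightarrow> ('c,'x,'a) board \<Rightarrow> 'x \<Rightarrow> 'a \<Rightarrow> 'c set set" where
  "arriving_stacks m b = sstar (mrel m) (populated_stacks (mdom m) b)"

definition surviving_chips :: "('x,'a::{semilattice_sup,bot}) morph \<Rightarrow> ('c,'x,'a) board \<Rightarrow> 'c list" where
  "surviving_chips m b = filter (occ (arriving_stacks m b)) (filter (occ (reset_stacks b)) (fst b))"

definition successor_stacks :: "'a::{semilattice_sup,bot} \<Rightarrow> ('x,'a) morph \<Rightarrow> ('c,'x,'a) board \<Rightarrow> ('x \<Rightarrow> 'c)
    \<Rightarrow> 'x \<Rightarrow> 'a \<Rightarrow> 'c set set" where
  "successor_stacks \<alpha> m b \<iota> = (\<lambda>y a. if a = \<alpha> then {}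
     else if a = bot then arriving_stacks m b y bot \<union> {insert (\<iota> y) S | S. S \<in> arriving_stacks m b y \<alpha>}
     else arriving_stacks m b y a)"

definition greedy_with :: "'a::{finite,bounded_semilattice_sup_bot} \<Rightarrow> (nat \<Rightarrow> 'c) \<Rightarrow> nat \<Rightarrow> ('x,'a) morph
    \<Rightarrow> ('c,'x,'a) board \<Rightarrow> ('c,'x,'a) board \<Rightarrow> 'c list \<Rightarrow> ('x \<Rightarrow> 'c) \<Rightarrow> bool" where
  "greedy_with \<alpha> ch K m b b' \<Theta>o \<iota> \<longleftrightarrow> (
     let rs = resets (rev (filter (covered b) (fst b))) b;
         b2 = populate (mdom m) (last rs);
         b3 = succ \<alpha> m b2 \<Theta>o \<iota>;
         b4 = thin b3
     in succ_ok \<alpha> m b2 \<Theta>o \<iota> \<and> b' = b4 \<and> ksparse \<alpha> ch K (mcod m) b4 \<and>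
        set (fst b4) \<inter> set (fst b) = (\<Inter>bb \<in> set (rs @ [b2, b3, b4]). set (fst bb)))"

lemma greedy_result_iff: "greedy_result \<alpha> ch K m b b' \<longleftrightarrow> (\<exists>\<Theta>o \<iota>. greedy_with \<alpha> ch K m b b' \<Theta>o \<iota>)"
  unfolding greedy_result_def greedy_with_def by simp

text \<open>The intermediate board \<open>(\<Theta>s, \<sigma>s)\<close> is the paper's \<open>(\<Theta>\<^sup>*, \<sigma>\<^sup>*)\<close>.\<close>

locale greedy_step =
  fixes \<alpha> :: "'a::{finite,bounded_semilattice_sup_bot}" and ch :: "nat \<Rightarrow> 'c" and K :: nat
    and m :: "('x,'a) morph" and b b' :: "('c,'x,'a) board" and \<Theta>o :: "'c list" and \<iota> :: "'x \<Rightarrow> 'c"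
  assumes alpha: "\<alpha> \<noteq> bot" and morph: "is_morph m" and sparse: "ksparse \<alpha> ch K (mdom m) b"
    and greedy: "greedy_with \<alpha> ch K m b b' \<Theta>o \<iota>"
begin

abbreviation "X \<equiv> mdom m"
abbreviation "Y \<equiv> mcod m"
abbreviation "\<Theta> \<equiv> fst b"
abbreviation "\<sigma> \<equiv> snd b"
abbreviation "\<Theta>2 \<equiv> filter (occ (reset_stacks b)) \<Theta>"
abbreviation "\<sigma>2 \<equiv> populated_stacks X b"
abbreviation "\<Theta>s \<equiv> surviving_chips m b"
abbreviation "\<sigma>s \<equiv> arriving_stacks m b"
abbreviation "\<Theta>3 \<equiv> \<Theta>s @ \<Theta>o"
abbreviation "\<sigma>3 \<equiv> successor_stacks \<alpha> m b \<iota>"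
abbreviation "\<Theta>' \<equiv> fst b'"
abbreviation "\<sigma>' \<equiv> snd b'"

lemma board: "is_board X b"
  using sparse unfolding ksparse_def by simp

lemma distinct_control: "distinct \<Theta>"
  using board unfolding is_board_def by simp

lemma stack_subset: "S \<in> \<sigma> x a \<Longrightarrow> S \<subseteq> set \<Theta>"
  using board unfolding is_board_def by blast

lemma reset_board: "last (resets (rev (filter (covered b) \<Theta>)) b) = trim \<Theta> (reset_stacks b)"
proof -
  have "filter (occ \<sigma>) \<Theta> = \<Theta>"
    using board unfolding is_board_def by (simp add: filter_id_conv)
  then have b: "trim \<Theta> \<sigma> = b" unfolding trim_def by simp
  have "last (resets (covered_chips b) (trim \<Theta> \<sigma>)) = trim \<Theta> (\<lambda>x a. truncate_all \<Theta> (covered_chips b) ` \<sigma> x a)"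
    by (rule last_resets_trim[OF distinct_control stack_subset])
  then show ?thesis unfolding b reset_stacks_def reset_all_def covered_chips_def .
qed

lemma greedy_unfolded:
  "succ_ok \<alpha> m (\<Theta>2, \<sigma>2) \<Theta>o \<iota> \<and> b' = thin (\<Theta>3, \<sigma>3) \<and> ksparse \<alpha> ch K Y (thin (\<Theta>3, \<sigma>3)) \<and>
   set (fst (thin (\<Theta>3, \<sigma>3))) \<inter> set \<Theta> =
     (\<Inter>bb \<in> set (resets (rev (filter (covered b) \<Theta>)) b @ [(\<Theta>2, \<sigma>2), (\<Theta>3, \<sigma>3), thin (\<Theta>3, \<sigma>3)]). set (fst bb))"
proof -
  have b2: "populate X (last (resets (rev (filter (covered b) \<Theta>)) b)) = (\<Theta>2, \<sigma>2)"
    unfolding reset_board trim_def populate_def populated_stacks_def by (simp cong: if_cong)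
  have b3: "succ \<alpha> m (\<Theta>2, \<sigma>2) \<Theta>o \<iota> = (\<Theta>3, \<sigma>3)"
    unfolding succ_def Let_def successor_stacks_def surviving_chips_def arriving_stacks_def
    by (simp cong: if_cong)
  show ?thesis using greedy by (simp only: greedy_with_def Let_def b2 b3)
qed

lemma succ_ok: "succ_ok \<alpha> m (\<Theta>2, \<sigma>2) \<Theta>o \<iota>"
  using greedy_unfolded by blast

lemma thin_successor: "b' = thin (\<Theta>3, \<sigma>3)"
  using greedy_unfolded by blast

lemma sparse': "ksparse \<alpha> ch K Y b'"
  using greedy_unfolded unfolding thin_successor[symmetric] by blast

lemma persistent_control:
  "set \<Theta>' \<inter> set \<Theta> =
     (\<Inter>bb \<in> set (resets (rev (filter (covered b) \<Theta>)) b @ [(\<Theta>2, \<sigma>2), (\<Theta>3, \<sigma>3), b']). set (fst bb))"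
  using greedy_unfolded unfolding thin_successor[symmetric] by blast

lemma stacks'_eq: "\<sigma>' y a = (if \<sigma>3 y a = {} then {} else {stack_min \<Theta>3 (\<sigma>3 y a)})"
  unfolding thin_successor thin_def Let_def by (simp cong: if_cong)

lemma control'_eq: "\<Theta>' = filter (occ \<sigma>') \<Theta>3"
  unfolding thin_successor thin_def Let_def by simp

lemma fresh_disjoint: "set \<Theta>o \<inter> set \<Theta>2 = {}"
  using succ_ok unfolding succ_ok_def by simp

lemma iota_bij: "bij_betw \<iota> {y \<in> Y. \<sigma>s y \<alpha> \<noteq> {}} (set \<Theta>o)"
  using succ_ok unfolding succ_ok_def arriving_stacks_def by simp

lemma distinct_successor_control: "distinct \<Theta>3"
  using succ_ok fresh_disjoint distinct_control unfolding succ_ok_def surviving_chips_def by auto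

lemma populated_cases: "S0 \<in> \<sigma>2 x a \<Longrightarrow> (\<exists>S\<in>\<sigma> x a. S0 = reset_all b S) \<or> (S0 = {} \<and> a = bot \<and> x \<in> X)"
  unfolding populated_stacks_def reset_stacks_def by (auto split: if_splits)

lemma populated_of_stack: "S \<in> \<sigma> x a \<Longrightarrow> reset_all b S \<in> \<sigma>2 x a"
  unfolding populated_stacks_def reset_stacks_def by auto

lemma populated_bot: "x \<in> X \<Longrightarrow> \<sigma>2 x bot \<noteq> {}"
  unfolding populated_stacks_def by auto

lemma arriving_iff: "S \<in> \<sigma>s y a \<longleftrightarrow> (\<exists>x a0 c. S \<in> \<sigma>2 x a0 \<and> (x, c, y) \<in> mrel m \<and> a = sup a0 c)"
  unfolding arriving_stacks_def sstar_def by blast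

lemma arriving_subset: "S \<in> \<sigma>s y a \<Longrightarrow> S \<subseteq> set \<Theta>s"
proof
  fix z assume S: "S \<in> \<sigma>s y a" and z: "z \<in> S"
  then obtain x a0 c where S0: "S \<in> \<sigma>2 x a0" using arriving_iff by blast
  have "occ \<sigma>s z" using S z unfolding occ_def by blast
  moreover obtain S1 where S1: "S1 \<in> \<sigma> x a0" "S = reset_all b S1"
    using populated_cases[OF S0] z by blast
  moreover have "z \<in> set \<Theta>" using z S1 reset_all_subset[of b S1] stack_subset by blast
  moreover have "occ (reset_stacks b) z" using S1 z unfolding occ_def reset_stacks_def by blast
  ultimately show "z \<in> set \<Theta>s" unfolding surviving_chips_def by simp
qed

lemma iota_fresh: "S \<in> \<sigma>s y \<alpha> \<Longrightarrow> \<iota> y \<in> set \<Theta>o"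
proof -
  assume S: "S \<in> \<sigma>s y \<alpha>"
  then obtain x c where "(x, c, y) \<in> mrel m" using arriving_iff by blast
  then have "y \<in> {y \<in> Y. \<sigma>s y \<alpha> \<noteq> {}}" using S morph unfolding is_morph_def by blast
  then show ?thesis using iota_bij bij_betw_apply by fast
qed

lemma successor_subset: "S \<in> \<sigma>3 y a \<Longrightarrow> S \<subseteq> set \<Theta>3"
  unfolding successor_stacks_def using arriving_subset iota_fresh
  by (fastforce split: if_splits)

lemma stacks'_least: "S \<in> \<sigma>' y a \<Longrightarrow> S \<in> \<sigma>3 y a \<and> (\<forall>S'\<in>\<sigma>3 y a. S' \<noteq> S \<longrightarrow> stack_less \<Theta>3 S S')"
proof -
  assume S: "S \<in> \<sigma>' y a"
  then have ne: "\<sigma>3 y a \<noteq> {}" and eq: "S = stack_min \<Theta>3 (\<sigma>3 y a)"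
    unfolding stacks'_eq by (auto split: if_splits)
  have "finite (\<sigma>3 y a)"
    using finite_subset[of _ "Pow (set \<Theta>3)"] successor_subset by blast
  then show ?thesis using stack_min_spec[OF _ ne _ distinct_successor_control] successor_subset eq by blast
qed

lemma stacks'_nonempty: "\<sigma>3 y a \<noteq> {} \<Longrightarrow> \<sigma>' y a \<noteq> {}"
  unfolding stacks'_eq by simp

lemma successor_forward:
  assumes "S0 \<in> \<sigma>2 x a" "(x, c, y) \<in> mrel m"
  shows "(sup a c \<noteq> \<alpha> \<longrightarrow> S0 \<in> \<sigma>3 y (sup a c)) \<and> (sup a c = \<alpha> \<longrightarrow> insert (\<iota> y) S0 \<in> \<sigma>3 y bot)"
proof -
  have "S0 \<in> \<sigma>s y (sup a c)" using assms arriving_iff by blast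
  then show ?thesis using alpha unfolding successor_stacks_def by auto
qed

lemma successor_backward:
  assumes "S' \<in> \<sigma>3 y a'"
  shows "\<exists>x a c S0. S0 \<in> \<sigma>2 x a \<and> (x, c, y) \<in> mrel m \<and>
     ((sup a c \<noteq> \<alpha> \<and> a' = sup a c \<and> S' = S0) \<or> (sup a c = \<alpha> \<and> a' = bot \<and> S' = insert (\<iota> y) S0))"
proof -
  have "a' \<noteq> \<alpha>" using assms unfolding successor_stacks_def by auto
  moreover consider (stay) "S' \<in> \<sigma>s y a'" | (fresh) S0 where "a' = bot" "S' = insert (\<iota> y) S0" "S0 \<in> \<sigma>s y \<alpha>"
    using assms unfolding successor_stacks_def by (auto split: if_splits)
  ultimately show ?thesis using arriving_iff by cases metis+
qed

lemma surviving_subset: "set \<Theta>s \<subseteq> set \<Theta>"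
  unfolding surviving_chips_def by auto

lemma chip_le_control':
  assumes "u \<in> set \<Theta>'" "v \<in> set \<Theta>'"
  shows "chip_le \<Theta>' u v \<longleftrightarrow> chip_le \<Theta>3 u v"
proof -
  have "occ \<sigma>' u" "occ \<sigma>' v" using assms unfolding control'_eq by auto
  then show ?thesis unfolding control'_eq by (rule chip_le_filter[OF distinct_successor_control])
qed

lemma chip_le_surviving:
  assumes "u \<in> set \<Theta>s" "v \<in> set \<Theta>s"
  shows "chip_le \<Theta>3 u v \<longleftrightarrow> chip_le \<Theta> u v"
proof -
  have "chip_le \<Theta>3 u v \<longleftrightarrow> chip_le \<Theta>s u v"
    using chip_le_append_left[OF distinct_successor_control assms] .
  also have "\<dots> \<longleftrightarrow> chip_le \<Theta> u v"
    using assms distinct_control unfolding surviving_chips_def by (simp add: chip_le_filter)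
  finally show ?thesis .
qed

lemma surviving_downward: "chip_le \<Theta>3 z u \<Longrightarrow> u \<in> set \<Theta>s \<Longrightarrow> z \<in> set \<Theta>s"
  using chip_le_mem not_chip_le_append[OF distinct_successor_control] by fastforce

lemma persistent_chip: "\<gamma> \<in> set \<Theta> \<Longrightarrow> \<gamma> \<in> set \<Theta>' \<Longrightarrow> \<gamma> \<in> set \<Theta>s \<and> \<gamma> \<notin> set \<Theta>o"
proof -
  assume "\<gamma> \<in> set \<Theta>" "\<gamma> \<in> set \<Theta>'"
  then have "\<gamma> \<in> set \<Theta>2" "\<gamma> \<in> set \<Theta>3" using persistent_control by auto
  then show ?thesis using fresh_disjoint by auto
qed

lemma chip_le_persistent:
  assumes "u \<in> set \<Theta>" "u \<in> set \<Theta>'" "v \<in> set \<Theta>" "v \<in> set \<Theta>'"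
  shows "chip_le \<Theta>' u v \<longleftrightarrow> chip_le \<Theta> u v"
  using chip_le_control'[OF assms(2,4)] chip_le_surviving persistent_chip assms by simp

lemma covered_chips_iff: "\<gamma> \<in> set (covered_chips b) \<longleftrightarrow> covered b \<gamma>"
  unfolding covered_chips_def covered_def by auto

end

section \<open>Threads through a path\<close>

primrec join_labels :: "(nat \<Rightarrow> 'a::semilattice_sup) \<Rightarrow> nat \<Rightarrow> nat \<Rightarrow> 'a" where
  "join_labels C n 0 = C n"
| "join_labels C n (Suc d) = sup (join_labels C n d) (C (n + Suc d))"

lemma join_labels_cong: "(\<And>i. i \<le> d \<Longrightarrow> C (n + i) = C' (n + i)) \<Longrightarrow> join_labels C n d = join_labels C' n d"
proof (induction d)
  case (Suc d)
  have "join_labels C n d = join_labels C' n d" using Suc.prems by (intro Suc.IH) auto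
  then show ?case using Suc.prems[of "Suc d"] by simp
qed simp

lemma join_labels_upper: "j \<le> d \<Longrightarrow> C (n + j) \<le> join_labels C n d"
proof (induction d)
  case (Suc d)
  then show ?case by (cases "j = Suc d") (auto intro: le_supI1)
qed simp

lemma Pp_of_edges:
  assumes "\<And>i. i \<le> d \<Longrightarrow> (X (n + i), C (n + i), X (n + i + 1)) \<in> mrel (\<tau> (n + i))"
  shows "(X n, join_labels C n d, X (n + d + 1)) \<in> Pp \<tau> n d"
  using assms
proof (induction d)
  case (Suc d)
  then show ?case unfolding Pp.simps rcomp_def by fastforce
qed simp

lemma Pp_edges:
  "(s, c, t) \<in> Pp \<tau> n d \<Longrightarrow> \<exists>X C. X n = s \<and> X (n + d + 1) = t \<and>
     (\<forall>i\<le>d. (X (n + i), C (n + i), X (n + i + 1)) \<in> mrel (\<tau> (n + i))) \<and> join_labels C n d = c"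
proof (induction d arbitrary: c t)
  case 0
  show ?case
    by (rule exI[of _ "\<lambda>i. if i = n then s else t"], rule exI[of _ "\<lambda>_. c"]) (use 0 in simp)
next
  case (Suc d)
  obtain y a a' where h: "(s, a, y) \<in> Pp \<tau> n d" "(y, a', t) \<in> mrel (\<tau> (n + Suc d))" "sup a a' = c"
    using Suc.prems unfolding Pp.simps rcomp_def by blast
  obtain X C where XC: "X n = s" "X (n + d + 1) = y"
     "\<forall>i\<le>d. (X (n + i), C (n + i), X (n + i + 1)) \<in> mrel (\<tau> (n + i))" "join_labels C n d = a"
    using Suc.IH[OF h(1)] by blast
  define X' where "X' i = (if i = n + Suc d + 1 then t else X i)" for i
  define C' where "C' i = (if i = n + Suc d then a' else C i)" for i
  have "\<forall>i\<le>Suc d. (X' (n + i), C' (n + i), X' (n + i + 1)) \<in> mrel (\<tau> (n + i))"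
  proof (intro allI impI)
    fix i assume "i \<le> Suc d"
    then consider "i = Suc d" | "i \<le> d" by linarith
    then show "(X' (n + i), C' (n + i), X' (n + i + 1)) \<in> mrel (\<tau> (n + i))"
      by cases (use h(2) XC(2,3) in \<open>simp_all add: X'_def C'_def\<close>)
  qed
  moreover have "join_labels C' n d = join_labels C n d"
    by (rule join_labels_cong) (simp add: C'_def)
  then have "join_labels C' n (Suc d) = c" using XC(4) h(3) unfolding C'_def by simp
  moreover have "X' n = s" "X' (n + Suc d + 1) = t" using XC(1) unfolding X'_def by simp_all
  ultimately show ?case by blast
qed

text \<open>An \<open>\<alpha>\<close>-thread from time \<open>k0\<close> follows edges \<open>(X t, C t, X (Suc t))\<close> of the path; \<open>lab t\<close> is the
  join of the labels since the join last reached \<open>\<alpha>\<close>, which happens infinitely often.\<close>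

definition alpha_thread :: "'a::bounded_semilattice_sup_bot \<Rightarrow> (nat \<Rightarrow> ('x,'a) morph) \<Rightarrow> nat
    \<Rightarrow> (nat \<Rightarrow> 'x) \<Rightarrow> (nat \<Rightarrow> 'a) \<Rightarrow> (nat \<Rightarrow> 'a) \<Rightarrow> bool" where
  "alpha_thread \<alpha> \<tau> k0 X C lab \<longleftrightarrow>
     (\<forall>t\<ge>k0. (X t, C t, X (Suc t)) \<in> mrel (\<tau> t) \<and>
        lab (Suc t) = (if sup (lab t) (C t) = \<alpha> then bot else sup (lab t) (C t))) \<and>
     infinite {t. k0 \<le> t \<and> sup (lab t) (C t) = \<alpha>}"

lemma alpha_thread_join:
  assumes labels: "\<And>t. k0 \<le> t \<Longrightarrow> lab (Suc t) = (if sup (lab t) (C t) = \<alpha> then bot else sup (lab t) (C t))"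
    and "k0 \<le> p" and no_reset: "\<And>j. j < d \<Longrightarrow> sup (lab (p + j)) (C (p + j)) \<noteq> \<alpha>"
  shows "sup (lab (p + d)) (C (p + d)) = sup (lab p) (join_labels C p d)"
  using no_reset
proof (induction d)
  case (Suc d)
  have "lab (p + Suc d) = sup (lab (p + d)) (C (p + d))"
    using labels[of "p + d"] \<open>k0 \<le> p\<close> Suc.prems[of d] by simp
  then show ?case using Suc by (simp add: sup_assoc)
qed simp

lemma trace_cond_if_alpha_thread:
  assumes thread: "alpha_thread \<alpha> \<tau> k0 X C lab" and morphs: "\<And>t. is_morph (\<tau> t)"
  shows "trace_cond \<alpha> \<tau>"
proof -
  define R where "R = {t. k0 \<le> t \<and> sup (lab t) (C t) = \<alpha>}"
  define e where "e = enumerate R"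
  have R: "infinite R" using thread unfolding alpha_thread_def R_def by simp
  have e_mono: "strict_mono e" unfolding e_def using enumerate_mono[OF _ R] by (simp add: strict_mono_def)
  have e_in: "e i \<in> R" for i unfolding e_def using enumerate_in_set[OF R] .
  have e_gap: "t \<notin> R" if "e i < t" "t < e (Suc i)" for i t
    using that not_less_Least unfolding e_def enumerate_Suc''[OF R] by blast
  define k where "k i = Suc (e i)" for i
  have edge: "(X t, C t, X (Suc t)) \<in> mrel (\<tau> t)" if "k0 \<le> t" for t
    using thread that unfolding alpha_thread_def by blast
  have "(X (k i), \<alpha>, X (k (Suc i))) \<in> Pcomp \<tau> (k i) (k (Suc i))" for i
  proof -
    define d where "d = e (Suc i) - k i"
    have "e i < e (Suc i)" using e_mono by (simp add: strict_mono_Suc_iff)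
    then have d: "k i + d = e (Suc i)" unfolding d_def k_def by simp
    have k0: "k0 \<le> k i" using e_in[of i] unfolding R_def k_def by simp
    have "lab (k i) = bot" using e_in[of i] thread unfolding R_def alpha_thread_def k_def by auto
    moreover have "sup (lab (k i + j)) (C (k i + j)) \<noteq> \<alpha>" if "j < d" for j
      using e_gap[of i "k i + j"] k0 that d unfolding R_def k_def by simp
    ultimately have "sup (lab (k i + d)) (C (k i + d)) = join_labels C (k i) d"
      using alpha_thread_join[OF _ k0, of lab C \<alpha> d] thread unfolding alpha_thread_def by simp
    then have "join_labels C (k i) d = \<alpha>" using e_in[of "Suc i"] d unfolding R_def by simp
    moreover have "(X (k i), join_labels C (k i) d, X (k i + d + 1)) \<in> Pp \<tau> (k i) d"
      using edge k0 by (intro Pp_of_edges) simp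
    moreover have "k (Suc i) = k i + d + 1" using d unfolding k_def by simp
    ultimately show ?thesis unfolding Pcomp_def by simp
  qed
  moreover have "X (k i) \<in> mdom (\<tau> (k i))" for i
    using edge[of "k i"] morphs[of "k i"] e_in[of i] unfolding is_morph_def R_def k_def by auto
  moreover have "strict_mono k" using e_mono unfolding k_def strict_mono_def by simp
  ultimately show ?thesis unfolding trace_cond_def by (intro exI[of _ k] exI[of _ "X \<circ> k"]) simp
qed

lemma strict_mono_segment:
  fixes k :: "nat \<Rightarrow> nat"
  assumes k: "strict_mono k" and t: "k 0 \<le> t"
  shows "\<exists>!i. k i \<le> t \<and> t < k (Suc i)"
proof -
  define i where "i = (LEAST i. t < k (Suc i))"
  have "t < k (Suc t)" using strict_mono_imp_increasing[OF k, of "Suc t"] by simp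
  then have lt: "t < k (Suc i)" unfolding i_def by (rule LeastI)
  have le: "k i \<le> t"
  proof (cases i)
    case (Suc j)
    then have "\<not> t < k (Suc j)" using not_less_Least[of j "\<lambda>i. t < k (Suc i)"] unfolding i_def by simp
    then show ?thesis using Suc by simp
  qed (use t in simp)
  have "j = i" if "k j \<le> t" "t < k (Suc j)" for j
    using le lt that strict_mono_less_eq[OF k] by (metis Suc_le_eq le_less_trans linorder_neqE_nat not_le)
  then show ?thesis using le lt by blast
qed

lemma glue_segments:
  fixes k :: "nat \<Rightarrow> nat"
  assumes k: "strict_mono k"
  obtains G where "\<And>i t. k i \<le> t \<Longrightarrow> t < k (Suc i) \<Longrightarrow> G t = F i t"
proof
  fix i t assume "k i \<le> t" "t < k (Suc i)"
  moreover have "k 0 \<le> t" using \<open>k i \<le> t\<close> strict_mono_less_eq[OF k, of 0 i] by simp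
  ultimately have "(THE i. k i \<le> t \<and> t < k (Suc i)) = i"
    using strict_mono_segment[OF k] by (metis (mono_tags, lifting) the1_equality)
  then show "F (THE i. k i \<le> t \<and> t < k (Suc i)) t = F i t" by simp
qed

lemma trace_cond_edges:
  assumes "trace_cond \<alpha> \<tau>"
  obtains k X C where "strict_mono k" "X (k 0) \<in> mdom (\<tau> (k 0))"
    "\<And>t. k 0 \<le> t \<Longrightarrow> (X t, C t, X (Suc t)) \<in> mrel (\<tau> t)"
    "\<And>i. join_labels C (k i) (k (Suc i) - k i - 1) = \<alpha>"
proof -
  obtain k s where k: "strict_mono k" and s: "\<And>i. s i \<in> mdom (\<tau> (k i))"
    and seg: "\<And>i. (s i, \<alpha>, s (Suc i)) \<in> Pcomp \<tau> (k i) (k (Suc i))"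
    using assms unfolding trace_cond_def by blast
  define d where "d i = k (Suc i) - k i - 1" for i
  have kS: "k (Suc i) = k i + d i + 1" for i
  proof -
    have "k i < k (Suc i)" using k by (simp add: strict_mono_Suc_iff)
    then show ?thesis unfolding d_def by simp
  qed
  have "\<exists>p. fst p (k i) = s i \<and> fst p (k i + d i + 1) = s (Suc i) \<and>
      (\<forall>j\<le>d i. (fst p (k i + j), snd p (k i + j), fst p (k i + j + 1)) \<in> mrel (\<tau> (k i + j))) \<and>
      join_labels (snd p) (k i) (d i) = \<alpha>" for i
  proof -
    have "(s i, \<alpha>, s (Suc i)) \<in> Pp \<tau> (k i) (d i)" using seg[of i] unfolding Pcomp_def d_def .
    then show ?thesis using Pp_edges by fastforce
  qed
  then obtain F where "\<forall>i. fst (F i) (k i) = s i \<and> fst (F i) (k i + d i + 1) = s (Suc i) \<and>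
      (\<forall>j\<le>d i. (fst (F i) (k i + j), snd (F i) (k i + j), fst (F i) (k i + j + 1)) \<in> mrel (\<tau> (k i + j))) \<and>
      join_labels (snd (F i)) (k i) (d i) = \<alpha>"
    using choice[of "\<lambda>i p. fst p (k i) = s i \<and> fst p (k i + d i + 1) = s (Suc i) \<and>
      (\<forall>j\<le>d i. (fst p (k i + j), snd p (k i + j), fst p (k i + j + 1)) \<in> mrel (\<tau> (k i + j))) \<and>
      join_labels (snd p) (k i) (d i) = \<alpha>"] by blast
  then obtain Xs Cs where Xs: "\<And>i. Xs i (k i) = s i" "\<And>i. Xs i (k i + d i + 1) = s (Suc i)"
    and edges: "\<And>i j. j \<le> d i \<Longrightarrow> (Xs i (k i + j), Cs i (k i + j), Xs i (k i + j + 1)) \<in> mrel (\<tau> (k i + j))"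
    and joins: "\<And>i. join_labels (Cs i) (k i) (d i) = \<alpha>"
    by (intro that[of "fst \<circ> F" "snd \<circ> F"]) auto
  obtain X where X: "\<And>i t. k i \<le> t \<Longrightarrow> t < k (Suc i) \<Longrightarrow> X t = Xs i t" using glue_segments[OF k] by blast
  obtain C where C: "\<And>i t. k i \<le> t \<Longrightarrow> t < k (Suc i) \<Longrightarrow> C t = Cs i t" using glue_segments[OF k] by blast
  show thesis
  proof
    show "X (k 0) \<in> mdom (\<tau> (k 0))" using X[of 0 "k 0"] Xs(1) s kS by simp
  next
    fix t assume "k 0 \<le> t"
    then obtain i where i: "k i \<le> t" "t < k (Suc i)" using strict_mono_segment[OF k] by blast
    have "X (Suc t) = Xs i (Suc t)"
    proof (cases "Suc t < k (Suc i)")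
      case False
      then have t: "Suc t = k (Suc i)" using i by simp
      have "X (Suc t) = Xs (Suc i) (k (Suc i))" using X[of "Suc i" "Suc t"] t kS[of "Suc i"] by simp
      also have "\<dots> = Xs i (k i + d i + 1)" using Xs by simp
      finally show ?thesis using t kS[of i] by simp
    qed (use X i in simp)
    then show "(X t, C t, X (Suc t)) \<in> mrel (\<tau> t)"
      using edges[of "t - k i" i] X[OF i] C[OF i] i kS[of i] by simp
  next
    fix i
    have "join_labels C (k i) (d i) = join_labels (Cs i) (k i) (d i)"
      using C kS by (intro join_labels_cong) simp
    then show "join_labels C (k i) (k (Suc i) - k i - 1) = \<alpha>" using joins unfolding d_def by simp
  qed (rule k)
qed

primrec reset_joins :: "'a::{semilattice_sup,bot} \<Rightarrow> (nat \<Rightarrow> 'a) \<Rightarrow> nat \<Rightarrow> nat \<Rightarrow> 'a" where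
  "reset_joins \<alpha> C k0 0 = bot"
| "reset_joins \<alpha> C k0 (Suc j) = (if sup (reset_joins \<alpha> C k0 j) (C (k0 + j)) = \<alpha> then bot
     else sup (reset_joins \<alpha> C k0 j) (C (k0 + j)))"

lemma alpha_thread_of_segments:
  fixes k :: "nat \<Rightarrow> nat" and \<alpha> :: "'a::bounded_semilattice_sup_bot"
  assumes alpha: "\<alpha> \<noteq> bot" and k: "strict_mono k"
    and edges: "\<And>t. k 0 \<le> t \<Longrightarrow> (X t, C t, X (Suc t)) \<in> mrel (\<tau> t)"
    and joins: "\<And>i. join_labels C (k i) (k (Suc i) - k i - 1) = \<alpha>"
  defines "lab t \<equiv> reset_joins \<alpha> C (k 0) (t - k 0)"
  shows "alpha_thread \<alpha> \<tau> (k 0) X C lab"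
proof -
  have labels: "lab (Suc t) = (if sup (lab t) (C t) = \<alpha> then bot else sup (lab t) (C t))" if "k 0 \<le> t" for t
    using that unfolding lab_def by (simp add: Suc_diff_le)
  have C_below: "C t \<le> \<alpha>" if t: "k 0 \<le> t" for t
  proof -
    obtain i where "k i \<le> t" "t < k (Suc i)" using strict_mono_segment[OF k t] by blast
    then show ?thesis using join_labels_upper[of "t - k i" "k (Suc i) - k i - 1" C "k i"] joins[of i] by simp
  qed
  have lab_below: "lab t \<le> \<alpha> \<and> lab t \<noteq> \<alpha>" if "k 0 \<le> t" for t
    using that
  proof (induction t rule: dec_induct)
    case base then show ?case using alpha unfolding lab_def by simp
  next
    case (step t)
    then show ?case using labels[of t] C_below[of t] alpha by auto
  qed
  have "\<exists>t\<ge>k i. t < k (Suc i) \<and> sup (lab t) (C t) = \<alpha>" for i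
  proof (rule ccontr)
    define d where "d = k (Suc i) - k i - 1"
    have ki: "k 0 \<le> k i" "k i < k (Suc i)" using k by (simp_all add: strict_mono_less_eq strict_mono_Suc_iff)
    assume "\<not> (\<exists>t\<ge>k i. t < k (Suc i) \<and> sup (lab t) (C t) = \<alpha>)"
    then have "sup (lab (k i + j)) (C (k i + j)) \<noteq> \<alpha>" if "j \<le> d" for j
      using that ki unfolding d_def by auto
    moreover have "sup (lab (k i + d)) (C (k i + d)) = sup (lab (k i)) (join_labels C (k i) d)"
      by (rule alpha_thread_join[of "k 0" lab C \<alpha>, OF labels ki(1)]) (use calculation in auto)
    ultimately show False using joins[of i] lab_below[OF ki(1)] unfolding d_def by (simp add: sup_absorb2)
  qed
  then have "infinite {t. k 0 \<le> t \<and> sup (lab t) (C t) = \<alpha>}"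
    unfolding infinite_nat_iff_unbounded_le using strict_mono_imp_increasing[OF k] strict_mono_less_eq[OF k]
    by (metis (mono_tags, lifting) le_trans mem_Collect_eq zero_le)
  then show ?thesis unfolding alpha_thread_def using edges labels by blast
qed

lemma alpha_thread_if_trace_cond:
  fixes \<alpha> :: "'a::bounded_semilattice_sup_bot"
  assumes "\<alpha> \<noteq> bot" "trace_cond \<alpha> \<tau>"
  obtains k0 X C lab where "alpha_thread \<alpha> \<tau> k0 X C lab" "X k0 \<in> mdom (\<tau> k0)" "lab k0 = bot"
proof -
  obtain k X C where k: "strict_mono k" "X (k 0) \<in> mdom (\<tau> (k 0))"
    "\<And>t. k 0 \<le> t \<Longrightarrow> (X t, C t, X (Suc t)) \<in> mrel (\<tau> t)"
    "\<And>i. join_labels C (k i) (k (Suc i) - k i - 1) = \<alpha>"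
    using trace_cond_edges[OF assms(2)] by blast
  let ?lab = "\<lambda>t. reset_joins \<alpha> C (k 0) (t - k 0)"
  have "alpha_thread \<alpha> \<tau> (k 0) X C ?lab"
    by (rule alpha_thread_of_segments[OF assms(1) k(1,3,4)])
  then show thesis using that[of "k 0" X C ?lab] k(2) by simp
qed

section \<open>Koenig's lemma for layered graphs\<close>

fun descendants :: "(nat \<Rightarrow> 'n set) \<Rightarrow> (nat \<Rightarrow> 'n \<Rightarrow> 'n \<Rightarrow> bool) \<Rightarrow> nat \<Rightarrow> 'n \<Rightarrow> nat \<Rightarrow> 'n set" where
  "descendants V E n v 0 = {v}"
| "descendants V E n v (Suc k) = {w \<in> V (n + Suc k). \<exists>u\<in>descendants V E n v k. E (n + k) u w}"

lemma descendants_empty_mono: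
  "descendants V E n v k = {} \<Longrightarrow> k \<le> k' \<Longrightarrow> descendants V E n v k' = {}"
proof (induction k')
  case (Suc k')
  then show ?case by (cases "k = Suc k'") auto
qed simp

lemma descendants_Suc_child:
  "x \<in> descendants V E n v (Suc k) \<Longrightarrow> \<exists>w. w \<in> V (Suc n) \<and> E n v w \<and> x \<in> descendants V E (Suc n) w k"
proof (induction k arbitrary: x)
  case (Suc k)
  then obtain u where u: "x \<in> V (n + Suc (Suc k))" "u \<in> descendants V E n v (Suc k)" "E (n + Suc k) u x"
    by auto
  obtain w where "w \<in> V (Suc n)" "E n v w" "u \<in> descendants V E (Suc n) w k" using Suc.IH[OF u(2)] by blast
  then show ?case using u by auto
qed simp

lemma descendants_cover:
  fixes V :: "nat \<Rightarrow> 'n set" and E :: "nat \<Rightarrow> 'n \<Rightarrow> 'n \<Rightarrow> bool" and n k :: nat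
  assumes pred: "\<And>n w. w \<in> V (Suc n) \<Longrightarrow> \<exists>v\<in>V n. E n v w"
  shows "w \<in> V (n + k) \<Longrightarrow> \<exists>v\<in>V n. w \<in> descendants V E n v k"
proof (induction k arbitrary: w)
  case (Suc k)
  obtain u where u: "u \<in> V (n + k)" "E (n + k) u w" using pred[where n="n + k" and w=w] Suc.prems by auto
  obtain v where "v \<in> V n" "u \<in> descendants V E n v k" using Suc.IH[OF u(1)] by blast
  then show ?case using Suc.prems u by auto
qed auto

lemma unbounded_descendants_root:
  fixes V :: "nat \<Rightarrow> 'n set" and E :: "nat \<Rightarrow> 'n \<Rightarrow> 'n \<Rightarrow> bool" and n :: nat
  assumes fin: "finite (V n)" and ne: "\<And>k. V (n + k) \<noteq> {}"
    and pred: "\<And>n w. w \<in> V (Suc n) \<Longrightarrow> \<exists>v\<in>V n. E n v w"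
  shows "\<exists>v\<in>V n. \<forall>k. descendants V E n v k \<noteq> {}"
proof (rule ccontr)
  assume "\<not> ?thesis"
  then have "\<forall>v\<in>V n. \<exists>k. descendants V E n v k = {}" by blast
  then obtain kf where kf: "\<forall>v\<in>V n. descendants V E n v (kf v) = {}" by metis
  define k where "k = Max (kf ` V n)"
  have "\<forall>v\<in>V n. descendants V E n v k = {}"
    using kf descendants_empty_mono fin unfolding k_def by (metis Max_ge finite_imageI imageI)
  moreover obtain w where "w \<in> V (n + k)" using ne by blast
  ultimately show False using descendants_cover[where V=V and E=E and n=n and k=k, OF pred] by blast
qed

lemma unbounded_descendants_child:
  fixes V :: "nat \<Rightarrow> 'n set" and E :: "nat \<Rightarrow> 'n \<Rightarrow> 'n \<Rightarrow> bool"
  assumes fin: "finite (V (Suc n))" and v: "\<forall>k. descendants V E n v k \<noteq> {}"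
  shows "\<exists>w\<in>V (Suc n). E n v w \<and> (\<forall>k. descendants V E (Suc n) w k \<noteq> {})"
proof (rule ccontr)
  let ?C = "{w \<in> V (Suc n). E n v w}"
  assume "\<not> ?thesis"
  then have "\<forall>w\<in>?C. \<exists>k. descendants V E (Suc n) w k = {}" by blast
  then obtain kf where kf: "\<forall>w\<in>?C. descendants V E (Suc n) w (kf w) = {}" by metis
  define k where "k = Max (insert 0 (kf ` ?C))"
  have "descendants V E (Suc n) w k = {}" if w: "w \<in> ?C" for w
  proof -
    have "kf w \<le> k" unfolding k_def using fin w by (intro Max_ge) auto
    moreover have "descendants V E (Suc n) w (kf w) = {}" using kf w by blast
    ultimately show ?thesis by (rule descendants_empty_mono[rotated])
  qed
  moreover obtain x where "x \<in> descendants V E n v (Suc k)"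
    using v[rule_format, of "Suc k"] by (meson ex_in_conv)
  then obtain w where "w \<in> V (Suc n)" "E n v w" "x \<in> descendants V E (Suc n) w k"
    by (blast dest: descendants_Suc_child)
  ultimately show False by blast
qed

lemma koenig:
  fixes V :: "nat \<Rightarrow> 'n set" and E :: "nat \<Rightarrow> 'n \<Rightarrow> 'n \<Rightarrow> bool"
  assumes fin: "\<And>n. finite (V n)" and ne: "\<And>n. V n \<noteq> {}"
    and pred: "\<And>n w. w \<in> V (Suc n) \<Longrightarrow> \<exists>v\<in>V n. E n v w"
  obtains f where "\<And>n. f n \<in> V n \<and> E n (f n) (f (Suc n))"
proof -
  define good where "good n v \<longleftrightarrow> v \<in> V n \<and> (\<forall>k. descendants V E n v k \<noteq> {})" for n v
  have start: "\<exists>v. good 0 v"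
    using unbounded_descendants_root[of V 0 E, OF fin ne pred] unfolding good_def by blast
  have step: "\<exists>w. E n v w \<and> good (Suc n) w" if "good n v" for n v
    using unbounded_descendants_child[of V n E v, OF fin] that unfolding good_def by blast
  define f where "f = rec_nat (SOME v. good 0 v) (\<lambda>n v. SOME w. E n v w \<and> good (Suc n) w)"
  have f0: "f 0 = (SOME v. good 0 v)" and fS: "f (Suc n) = (SOME w. E n (f n) w \<and> good (Suc n) w)" for n
    unfolding f_def by simp_all
  have good: "good n (f n)" for n
  proof (induction n)
    case 0 then show ?case unfolding f0 using start by (rule someI_ex)
  next
    case (Suc n)
    show ?case unfolding fS by (rule someI_ex[OF step[OF Suc], THEN conjunct2])
  qed
  have E: "E n (f n) (f (Suc n))" for n
    unfolding fS by (rule someI_ex[OF step[OF good[of n]], THEN conjunct1])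
  show thesis
  proof (rule that)
    show "f n \<in> V n \<and> E n (f n) (f (Suc n))" for n using good[of n] E[of n] unfolding good_def by blast
  qed
qed

lemma koenig_from:
  fixes V :: "nat \<Rightarrow> 'n set" and E :: "nat \<Rightarrow> 'n \<Rightarrow> 'n \<Rightarrow> bool"
  assumes fin: "\<And>n. N \<le> n \<Longrightarrow> finite (V n)" and ne: "\<And>n. N \<le> n \<Longrightarrow> V n \<noteq> {}"
    and pred: "\<And>n w. N \<le> n \<Longrightarrow> w \<in> V (Suc n) \<Longrightarrow> \<exists>v\<in>V n. E n v w"
  obtains f where "\<And>n. N \<le> n \<Longrightarrow> f n \<in> V n \<and> E n (f n) (f (Suc n))"
proof -
  have fin': "finite (V (N + n))" and ne': "V (N + n) \<noteq> {}" for n using fin ne by simp_all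
  have pred': "\<exists>v\<in>V (N + n). E (N + n) v w" if "w \<in> V (N + Suc n)" for n w
    using pred[of "N + n" w] that by simp
  obtain f where f: "\<And>n. f n \<in> V (N + n) \<and> E (N + n) (f n) (f (Suc n))"
    using koenig[of "\<lambda>n. V (N + n)" "\<lambda>n. E (N + n)", OF fin' ne' pred'] by blast
  show thesis
  proof (rule that)
    fix n assume "N \<le> n"
    then show "f (n - N) \<in> V n \<and> E n (f (n - N)) (f (Suc n - N))"
      using f[of "n - N"] by (simp add: Suc_diff_le)
  qed
qed

section \<open>Runs of the Safra automaton\<close>

definition greedy_choice :: "'a::{finite,bounded_semilattice_sup_bot} \<Rightarrow> (nat \<Rightarrow> 'c) \<Rightarrow> nat \<Rightarrow> ('x,'a) morph
    \<Rightarrow> ('c,'x,'a) board \<Rightarrow> ('c,'x,'a) board \<Rightarrow> 'c list \<times> ('x \<Rightarrow> 'c)" where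
  "greedy_choice \<alpha> ch K m b b' = (SOME p. greedy_with \<alpha> ch K m b b' (fst p) (snd p))"

lemma greedy_with_choice:
  assumes "greedy_result \<alpha> ch K m b b'"
  shows "greedy_with \<alpha> ch K m b b' (fst (greedy_choice \<alpha> ch K m b b')) (snd (greedy_choice \<alpha> ch K m b b'))"
proof -
  obtain \<Theta>o \<iota> where "greedy_with \<alpha> ch K m b b' \<Theta>o \<iota>"
    using assms unfolding greedy_result_iff by blast
  then have "greedy_with \<alpha> ch K m b b' (fst (\<Theta>o, \<iota>)) (snd (\<Theta>o, \<iota>))" by simp
  then show ?thesis unfolding greedy_choice_def
    by (rule someI[where P="\<lambda>p. greedy_with \<alpha> ch K m b b' (fst p) (snd p)"])
qed

locale safra_path =
  fixes \<alpha> :: "'a::{finite,bounded_semilattice_sup_bot}" and Ob :: "'x set set" and S :: "'x set"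
    and M :: "('x,'a) morph set" and ch :: "nat \<Rightarrow> 'c"
    and g :: "('x,'a) morph \<Rightarrow> ('c,'x,'a) board \<Rightarrow> ('c,'x,'a) board" and \<tau> :: "nat \<Rightarrow> ('x,'a) morph"
  assumes alpha: "\<alpha> \<noteq> bot" and morphs: "\<And>n. is_morph (\<tau> n)"
    and chosen: "safra_choice \<alpha> ch Ob M g" and in_M: "\<And>n. \<tau> n \<in> M"
    and domains: "\<And>n. mdom (\<tau> n) = fst (safra_run S g \<tau> n)"
begin

abbreviation "K \<equiv> safraK Ob"

definition board :: "nat \<Rightarrow> ('c,'x,'a) board" where
  "board n = snd (safra_run S g \<tau> n)"

abbreviation "\<Theta> n \<equiv> fst (board n)"
abbreviation "\<sigma> n \<equiv> snd (board n)"

definition fresh :: "nat \<Rightarrow> 'c list" where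
  "fresh n = fst (greedy_choice \<alpha> ch K (\<tau> n) (board n) (board (Suc n)))"

definition iota :: "nat \<Rightarrow> 'x \<Rightarrow> 'c" where
  "iota n = snd (greedy_choice \<alpha> ch K (\<tau> n) (board n) (board (Suc n)))"

lemma greedy_step_if_sparse:
  assumes "ksparse \<alpha> ch K (mdom (\<tau> n)) (board n)"
  shows "greedy_step \<alpha> ch K (\<tau> n) (board n) (board (Suc n)) (fresh n) (iota n)"
proof
  have "greedy_result \<alpha> ch K (\<tau> n) (board n) (g (\<tau> n) (board n))"
    using chosen in_M assms unfolding safra_choice_def by blast
  then show "greedy_with \<alpha> ch K (\<tau> n) (board n) (board (Suc n)) (fresh n) (iota n)"
    unfolding fresh_def iota_def board_def by (simp add: greedy_with_choice)
qed (use alpha morphs assms in auto)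

lemma sparse: "ksparse \<alpha> ch K (mdom (\<tau> n)) (board n)"
proof (induction n)
  case 0
  show ?case using domains[of 0] unfolding board_def ksparse_def is_board_def occ_def by simp
next
  case (Suc n)
  interpret s: greedy_step \<alpha> ch K "\<tau> n" "board n" "board (Suc n)" "fresh n" "iota n"
    using greedy_step_if_sparse[OF Suc] .
  show ?case using s.sparse' domains[of "Suc n"] domains[of n] by (simp add: board_def)
qed

lemma greedy_step: "greedy_step \<alpha> ch K (\<tau> n) (board n) (board (Suc n)) (fresh n) (iota n)"
  using greedy_step_if_sparse[OF sparse] .

lemma board: "is_board (mdom (\<tau> n)) (board n)"
  using sparse unfolding ksparse_def by simp

lemma distinct_control: "distinct (\<Theta> n)"
  using board unfolding is_board_def by simp

lemma stack_subset: "St \<in> \<sigma> n x a \<Longrightarrow> St \<subseteq> set (\<Theta> n)"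
  using board unfolding is_board_def by blast

lemma stack_dom: "St \<in> \<sigma> n x a \<Longrightarrow> x \<in> mdom (\<tau> n)"
  using board unfolding is_board_def by blast

lemma control_occurs: "\<gamma> \<in> set (\<Theta> n) \<Longrightarrow> \<exists>x a St. St \<in> \<sigma> n x a \<and> \<gamma> \<in> St"
  using board unfolding is_board_def occ_def by blast

lemma stack_unique: "St \<in> \<sigma> n x a \<Longrightarrow> St' \<in> \<sigma> n x a \<Longrightarrow> St = St'"
proof -
  assume St: "St \<in> \<sigma> n x a" "St' \<in> \<sigma> n x a"
  have "\<sigma> n x a \<subseteq> Pow (set (\<Theta> n))" using stack_subset by blast
  then have fin: "finite (\<sigma> n x a)" by (rule finite_subset) simp
  have "card (\<sigma> n x a) \<le> Suc 0" using sparse unfolding ksparse_def by simp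
  then show ?thesis using card_le_Suc0_iff_eq[OF fin] St by blast
qed

lemma chip_le_persistent:
  assumes "u \<in> set (\<Theta> n)" "u \<in> set (\<Theta> (Suc n))" "v \<in> set (\<Theta> n)" "v \<in> set (\<Theta> (Suc n))"
  shows "chip_le (\<Theta> (Suc n)) u v \<longleftrightarrow> chip_le (\<Theta> n) u v"
proof -
  interpret s: greedy_step \<alpha> ch K "\<tau> n" "board n" "board (Suc n)" "fresh n" "iota n" by (rule greedy_step)
  show ?thesis using s.chip_le_persistent[OF assms] .
qed

lemma stack_predecessor:
  assumes \<gamma>: "\<gamma> \<in> set (\<Theta> n)" "\<gamma> \<in> set (\<Theta> (Suc n))" and St': "St' \<in> \<sigma> (Suc n) y a'" "\<gamma> \<in> St'"
  obtains x a c St where "St \<in> \<sigma> n x a" "\<gamma> \<in> St" "(x, c, y) \<in> mrel (\<tau> n)"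
    "if sup a c = \<alpha> then a' = bot \<and> St' = insert (iota n y) (reset_all (board n) St)
     else a' = sup a c \<and> St' = reset_all (board n) St"
proof -
  interpret s: greedy_step \<alpha> ch K "\<tau> n" "board n" "board (Suc n)" "fresh n" "iota n" by (rule greedy_step)
  have "St' \<in> s.\<sigma>3 y a'" using s.stacks'_least[OF St'(1)] by blast
  then obtain x a c S0 where S0: "S0 \<in> s.\<sigma>2 x a" and edge: "(x, c, y) \<in> mrel (\<tau> n)"
    and cases: "(sup a c \<noteq> \<alpha> \<and> a' = sup a c \<and> St' = S0) \<or> (sup a c = \<alpha> \<and> a' = bot \<and> St' = insert (iota n y) S0)"
    by (blast dest: s.successor_backward)
  have "\<gamma> \<notin> set (fresh n)" using s.persistent_chip[OF \<gamma>] by blast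
  moreover have "iota n y \<in> set (fresh n)" if "sup a c = \<alpha>"
  proof -
    have "S0 \<in> s.\<sigma>s y \<alpha>" unfolding s.arriving_iff using S0 edge that by blast
    then show ?thesis by (rule s.iota_fresh)
  qed
  ultimately have "\<gamma> \<in> S0" using cases St'(2) by auto
  then obtain St where St: "St \<in> \<sigma> n x a" "S0 = reset_all (board n) St"
    using s.populated_cases[OF S0] by blast
  then have "\<gamma> \<in> St" using \<open>\<gamma> \<in> S0\<close> reset_all_subset[of "board n" St] by blast
  show thesis by (rule that[OF St(1) \<open>\<gamma> \<in> St\<close> edge]) (use cases St(2) in auto)
qed

definition stack_thread :: "'c \<Rightarrow> nat \<Rightarrow> (nat \<Rightarrow> 'x) \<Rightarrow> (nat \<Rightarrow> 'a) \<Rightarrow> (nat \<Rightarrow> 'a) \<Rightarrow> (nat \<Rightarrow> 'c set) \<Rightarrow> bool" where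
  "stack_thread \<gamma> N X C lab St \<longleftrightarrow> (\<forall>n\<ge>N. St n \<in> \<sigma> n (X n) (lab n) \<and> \<gamma> \<in> St n \<and>
     (X n, C n, X (Suc n)) \<in> mrel (\<tau> n) \<and>
     (if sup (lab n) (C n) = \<alpha> then lab (Suc n) = bot \<and> St (Suc n) = insert (iota n (X (Suc n))) (reset_all (board n) (St n))
      else lab (Suc n) = sup (lab n) (C n) \<and> St (Suc n) = reset_all (board n) (St n)))"

lemma stack_thread_exists:
  assumes persistent: "\<And>n. N \<le> n \<Longrightarrow> \<gamma> \<in> set (\<Theta> n)"
  obtains X C lab St where "stack_thread \<gamma> N X C lab St"
proof -
  define V where "V n = {(x, a, St). St \<in> \<sigma> n x a \<and> \<gamma> \<in> St}" for n
  define E where "E n = (\<lambda>(x, a, St) (y, a', St'). \<exists>c. (x, c, y) \<in> mrel (\<tau> n) \<and>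
    (if sup a c = \<alpha> then a' = bot \<and> St' = insert (iota n y) (reset_all (board n) St)
     else a' = sup a c \<and> St' = reset_all (board n) St))" for n
  have "V n \<subseteq> mdom (\<tau> n) \<times> UNIV \<times> Pow (set (\<Theta> n))" for n
    unfolding V_def using stack_dom stack_subset by blast
  moreover have "finite (mdom (\<tau> n) \<times> (UNIV :: 'a set) \<times> Pow (set (\<Theta> n)))" for n
    using morphs[of n] unfolding is_morph_def by simp
  ultimately have fin: "finite (V n)" for n by (rule finite_subset)
  have ne: "V n \<noteq> {}" if "N \<le> n" for n
    using control_occurs[OF persistent[OF that]] unfolding V_def by blast
  have pred: "\<exists>v\<in>V n. E n v w" if n: "N \<le> n" and w: "w \<in> V (Suc n)" for n w
  proof -
    obtain y a' St' where w: "w = (y, a', St')" "St' \<in> \<sigma> (Suc n) y a'" "\<gamma> \<in> St'"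
      using w unfolding V_def by blast
    obtain x a c St where "St \<in> \<sigma> n x a" "\<gamma> \<in> St" "(x, c, y) \<in> mrel (\<tau> n)"
      "if sup a c = \<alpha> then a' = bot \<and> St' = insert (iota n y) (reset_all (board n) St)
       else a' = sup a c \<and> St' = reset_all (board n) St"
      by (rule stack_predecessor[OF persistent[OF n] persistent[OF le_SucI[OF n]] w(2,3)])
    then show ?thesis unfolding V_def E_def w(1) by blast
  qed
  obtain f where f: "\<And>n. N \<le> n \<Longrightarrow> f n \<in> V n \<and> E n (f n) (f (Suc n))"
    using koenig_from[of N V E] fin ne pred by blast
  define X where "X n = fst (f n)" for n
  define lab where "lab n = fst (snd (f n))" for n
  define St where "St n = snd (snd (f n))" for n
  have f_eq: "f n = (X n, lab n, St n)" for n unfolding X_def lab_def St_def by simp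
  have "\<forall>n. \<exists>c. N \<le> n \<longrightarrow> (X n, c, X (Suc n)) \<in> mrel (\<tau> n) \<and>
    (if sup (lab n) c = \<alpha> then lab (Suc n) = bot \<and> St (Suc n) = insert (iota n (X (Suc n))) (reset_all (board n) (St n))
     else lab (Suc n) = sup (lab n) c \<and> St (Suc n) = reset_all (board n) (St n))"
    using f unfolding E_def f_eq by auto
  from choice[OF this] obtain C where "\<forall>n. N \<le> n \<longrightarrow> (X n, C n, X (Suc n)) \<in> mrel (\<tau> n) \<and>
    (if sup (lab n) (C n) = \<alpha> then lab (Suc n) = bot \<and> St (Suc n) = insert (iota n (X (Suc n))) (reset_all (board n) (St n))
     else lab (Suc n) = sup (lab n) (C n) \<and> St (Suc n) = reset_all (board n) (St n))"
    by blast
  moreover have "St n \<in> \<sigma> n (X n) (lab n) \<and> \<gamma> \<in> St n" if "N \<le> n" for n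
    using f[OF that] unfolding V_def f_eq by simp
  ultimately show thesis using that[of X C lab St] unfolding stack_thread_def by blast
qed

lemma stack_thread_at:
  assumes "stack_thread \<gamma> N X C lab St" "N \<le> n"
  shows "St n \<in> \<sigma> n (X n) (lab n)" "\<gamma> \<in> St n" "(X n, C n, X (Suc n)) \<in> mrel (\<tau> n)"
    "sup (lab n) (C n) \<noteq> \<alpha> \<Longrightarrow> lab (Suc n) = sup (lab n) (C n) \<and> St (Suc n) = reset_all (board n) (St n)"
    "sup (lab n) (C n) = \<alpha> \<Longrightarrow> lab (Suc n) = bot"
  using assms unfolding stack_thread_def by auto

lemma stack_thread_below_covered:
  assumes thread: "stack_thread \<gamma> N X C lab St" and cov: "covered (board n1) \<gamma>" and "N \<le> n1" "n1 < m"
    and no_reset: "\<And>j. n1 \<le> j \<Longrightarrow> j < m \<Longrightarrow> sup (lab j) (C j) \<noteq> \<alpha>"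
  shows "\<forall>z\<in>St m. chip_le (\<Theta> m) z \<gamma>"
  using \<open>n1 < m\<close> no_reset
proof (induction m)
  case (Suc m)
  have m: "N \<le> m" "n1 \<le> m" using Suc.prems(1) \<open>N \<le> n1\<close> by auto
  have step: "St (Suc m) = reset_all (board m) (St m)"
    using stack_thread_at(4)[OF thread m(1) Suc.prems(2)[OF m(2)]] by simp
  note at_m = stack_thread_at(1,2)[OF thread m(1)] and at_Suc = stack_thread_at(1,2)[OF thread le_SucI[OF m(1)]]
  have "chip_le (\<Theta> (Suc m)) z \<gamma>" if z: "z \<in> St (Suc m)" for z
  proof -
    have "z \<in> reset_all (board m) (St m)" using z step by simp
    then have zm: "z \<in> St m" using reset_all_subset[of "board m" "St m"] by blast
    have "chip_le (\<Theta> m) z \<gamma>"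
    proof (cases "m = n1")
      case True
      then have "\<gamma> \<in> set (covered_chips (board m))"
        using cov unfolding covered_chips_def covered_def by auto
      then show ?thesis
        using truncate_all_below[of \<gamma> "covered_chips (board m)" "\<Theta> m" "St m" z] z at_Suc(2) step
        unfolding reset_all_def by simp
    next
      case False
      have "\<forall>z\<in>St m. chip_le (\<Theta> m) z \<gamma>"
      proof (rule Suc.IH)
        show "n1 < m" using False m(2) by simp
        show "sup (lab j) (C j) \<noteq> \<alpha>" if "n1 \<le> j" "j < m" for j using Suc.prems(2) that by simp
      qed
      then show ?thesis using zm by blast
    qed
    moreover have "z \<in> set (\<Theta> m)" "\<gamma> \<in> set (\<Theta> m)" "z \<in> set (\<Theta> (Suc m))" "\<gamma> \<in> set (\<Theta> (Suc m))"
      using stack_subset[OF at_m(1)] stack_subset[OF at_Suc(1)] at_m(2) at_Suc(2) zm z by blast+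
    ultimately show ?thesis using chip_le_persistent[of z m \<gamma>] by simp
  qed
  then show ?case by blast
qed simp

lemma stack_thread_resets:
  assumes thread: "stack_thread \<gamma> N X C lab St" and "N \<le> n1" "n1 < m"
    and "covered (board n1) \<gamma>" "covered (board m) \<gamma>"
  shows "\<exists>j. n1 \<le> j \<and> j < m \<and> sup (lab j) (C j) = \<alpha>"
proof (rule ccontr)
  assume "\<not> ?thesis"
  then have "\<forall>z\<in>St m. chip_le (\<Theta> m) z \<gamma>" using stack_thread_below_covered[OF thread assms(4,2,3)] by blast
  moreover have "St m \<in> \<sigma> m (X m) (lab m)" "\<gamma> \<in> St m"
    using stack_thread_at(1,2)[OF thread] assms(2,3) by auto
  ultimately show False using assms(5) unfolding covered_def is_top_def by blast
qed

lemma alpha_thread_if_stack_thread: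
  assumes thread: "stack_thread \<gamma> N X C lab St" and cov: "infinite {n. covered (board n) \<gamma>}"
  shows "alpha_thread \<alpha> \<tau> N X C lab"
proof -
  have "\<exists>j\<ge>n. j \<in> {t. N \<le> t \<and> sup (lab t) (C t) = \<alpha>}" for n
  proof -
    obtain t1 where t1: "max N n \<le> t1" "covered (board t1) \<gamma>"
      using cov unfolding infinite_nat_iff_unbounded_le by blast
    obtain t2 where t2: "Suc t1 \<le> t2" "covered (board t2) \<gamma>"
      using cov unfolding infinite_nat_iff_unbounded_le by blast
    obtain j where "t1 \<le> j" "sup (lab j) (C j) = \<alpha>"
      using stack_thread_resets[OF thread _ _ t1(2) t2(2)] t1(1) t2(1) by auto
    then show ?thesis using t1(1) by (intro exI[of _ j]) auto
  qed
  then have "infinite {t. N \<le> t \<and> sup (lab t) (C t) = \<alpha>}"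
    unfolding infinite_nat_iff_unbounded_le by blast
  moreover have "(X t, C t, X (Suc t)) \<in> mrel (\<tau> t) \<and>
      lab (Suc t) = (if sup (lab t) (C t) = \<alpha> then bot else sup (lab t) (C t))" if "N \<le> t" for t
    using stack_thread_at(3-5)[OF thread that] by (cases "sup (lab t) (C t) = \<alpha>") auto
  ultimately show ?thesis unfolding alpha_thread_def by blast
qed

lemma trace_cond_if_accepting:
  assumes "infinite {n. covered (board n) \<gamma>}" "finite {n. \<gamma> \<notin> set (\<Theta> n)}"
  shows "trace_cond \<alpha> \<tau>"
proof -
  obtain N where "\<forall>n\<in>{n. \<gamma> \<notin> set (\<Theta> n)}. n < N"
    using assms(2) unfolding finite_nat_set_iff_bounded by blast
  then have "\<gamma> \<in> set (\<Theta> n)" if "N \<le> n" for n using that by force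
  then obtain X C lab St where "stack_thread \<gamma> N X C lab St" using stack_thread_exists by blast
  then have "alpha_thread \<alpha> \<tau> N X C lab" using assms(1) by (rule alpha_thread_if_stack_thread)
  then show ?thesis using morphs by (rule trace_cond_if_alpha_thread)
qed

end

lemma antimono_nat_eventually_const:
  fixes f :: "nat \<Rightarrow> nat"
  assumes "\<And>t. N \<le> t \<Longrightarrow> f (Suc t) \<le> f t"
  shows "\<exists>N'\<ge>N. \<forall>t\<ge>N'. f t = f N'"
proof -
  have mono: "f t \<le> f s" if "N \<le> s" "s \<le> t" for s t
    using that(2)
  proof (induction t rule: dec_induct)
    case (step t)
    then show ?case using assms[of t] that(1) by simp
  qed simp
  have "f ` {N..} \<subseteq> {..f N}" using mono[of N] by auto
  then have fin: "finite (f ` {N..})" by (rule finite_subset) simp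
  obtain N' where N': "N \<le> N'" "f N' = Min (f ` {N..})" using Min_in[OF fin] by auto
  have "f t = f N'" if "N' \<le> t" for t
  proof -
    have "f t \<in> f ` {N..}" using N'(1) that by simp
    then have "f t \<le> f N'" "f N' \<le> f t" using mono[OF N'(1) that] N'(2) Min_le[OF fin] by auto
    then show "f t = f N'" by simp
  qed
  then show ?thesis using N'(1) by blast
qed

locale safra_thread = safra_path \<alpha> Ob S M ch g \<tau>
  for \<alpha> :: "'a::{finite,bounded_semilattice_sup_bot}" and Ob :: "'x set set" and S :: "'x set"
    and M :: "('x,'a) morph set" and ch :: "nat \<Rightarrow> 'c"
    and g :: "('x,'a) morph \<Rightarrow> ('c,'x,'a) board \<Rightarrow> ('c,'x,'a) board" and \<tau> :: "nat \<Rightarrow> ('x,'a) morph" +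
  fixes k0 :: nat and X :: "nat \<Rightarrow> 'x" and C lab :: "nat \<Rightarrow> 'a"
  assumes thread: "alpha_thread \<alpha> \<tau> k0 X C lab" and start: "X k0 \<in> mdom (\<tau> k0)" and lab_start: "lab k0 = bot"
begin

abbreviation "\<Theta>3 t \<equiv> surviving_chips (\<tau> t) (board t) @ fresh t"

definition reset_at :: "nat \<Rightarrow> bool" where
  "reset_at t \<longleftrightarrow> sup (lab t) (C t) = \<alpha>"

lemma edge: "k0 \<le> t \<Longrightarrow> (X t, C t, X (Suc t)) \<in> mrel (\<tau> t)"
  using thread unfolding alpha_thread_def by blast

lemma lab_Suc: "k0 \<le> t \<Longrightarrow> lab (Suc t) = (if reset_at t then bot else sup (lab t) (C t))"
  using thread unfolding alpha_thread_def reset_at_def by blast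

lemma resets_unbounded: "\<exists>t\<ge>n. k0 \<le> t \<and> reset_at t"
  using thread unfolding alpha_thread_def reset_at_def infinite_nat_iff_unbounded_le by blast

lemma thread_stacks_nonempty:
  "populated_stacks (mdom (\<tau> t)) (board t) (X t) (lab t) \<noteq> {} \<and> (k0 < t \<longrightarrow> \<sigma> t (X t) (lab t) \<noteq> {})"
  if "k0 \<le> t"
  using that
proof (induction t rule: dec_induct)
  case base
  interpret s: greedy_step \<alpha> ch K "\<tau> k0" "board k0" "board (Suc k0)" "fresh k0" "iota k0" by (rule greedy_step)
  show ?case using s.populated_bot[OF start] lab_start by simp
next
  case (step t)
  interpret s: greedy_step \<alpha> ch K "\<tau> t" "board t" "board (Suc t)" "fresh t" "iota t" by (rule greedy_step)
  interpret s1: greedy_step \<alpha> ch K "\<tau> (Suc t)" "board (Suc t)" "board (Suc (Suc t))" "fresh (Suc t)" "iota (Suc t)"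
    by (rule greedy_step)
  obtain S0 where S0: "S0 \<in> s.\<sigma>2 (X t) (lab t)" using step.IH by blast
  have "s.\<sigma>3 (X (Suc t)) (lab (Suc t)) \<noteq> {}"
    using s.successor_forward[OF S0 edge[OF step.hyps(1)]] lab_Suc[OF step.hyps(1)] unfolding reset_at_def
    by (cases "sup (lab t) (C t) = \<alpha>") auto
  then have "\<sigma> (Suc t) (X (Suc t)) (lab (Suc t)) \<noteq> {}" by (rule s.stacks'_nonempty)
  moreover then have "s1.\<sigma>2 (X (Suc t)) (lab (Suc t)) \<noteq> {}" using s1.populated_of_stack by blast
  ultimately show ?case by simp
qed

definition thread_stack :: "nat \<Rightarrow> 'c set" where
  "thread_stack t = (SOME St. St \<in> \<sigma> t (X t) (lab t))"

lemma thread_stack: "k0 < t \<Longrightarrow> thread_stack t \<in> \<sigma> t (X t) (lab t)"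
  unfolding thread_stack_def using thread_stacks_nonempty[of t] by (simp add: some_in_eq)

lemma thread_stack_subset: "k0 < t \<Longrightarrow> thread_stack t \<subseteq> set (\<Theta> t)"
  using thread_stack stack_subset by blast

definition carried_stack :: "nat \<Rightarrow> 'c set" where
  "carried_stack t = (if reset_at t then insert (iota t (X (Suc t))) (reset_all (board t) (thread_stack t))
     else reset_all (board t) (thread_stack t))"

lemma carried_stack:
  assumes "k0 < t"
  shows "carried_stack t \<in> successor_stacks \<alpha> (\<tau> t) (board t) (iota t) (X (Suc t)) (lab (Suc t))"
    and "thread_stack (Suc t) = carried_stack t \<or> stack_less (\<Theta>3 t) (thread_stack (Suc t)) (carried_stack t)"
proof -
  interpret s: greedy_step \<alpha> ch K "\<tau> t" "board t" "board (Suc t)" "fresh t" "iota t" by (rule greedy_step)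
  have "reset_all (board t) (thread_stack t) \<in> s.\<sigma>2 (X t) (lab t)"
    using s.populated_of_stack thread_stack assms by blast
  then show in3: "carried_stack t \<in> s.\<sigma>3 (X (Suc t)) (lab (Suc t))"
    using s.successor_forward[OF _ edge] lab_Suc assms unfolding carried_stack_def reset_at_def
    by (cases "reset_at t") (auto simp: reset_at_def)
  have "thread_stack (Suc t) \<in> \<sigma> (Suc t) (X (Suc t)) (lab (Suc t))" using thread_stack assms by simp
  then show "thread_stack (Suc t) = carried_stack t \<or> stack_less (\<Theta>3 t) (thread_stack (Suc t)) (carried_stack t)"
    using s.stacks'_least in3 by blast
qed

lemma reset_thread_stack_surviving: "k0 < t \<Longrightarrow> reset_all (board t) (thread_stack t) \<subseteq> set (surviving_chips (\<tau> t) (board t))"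
proof -
  assume t: "k0 < t"
  interpret s: greedy_step \<alpha> ch K "\<tau> t" "board t" "board (Suc t)" "fresh t" "iota t" by (rule greedy_step)
  have "reset_all (board t) (thread_stack t) \<in> s.\<sigma>2 (X t) (lab t)"
    using s.populated_of_stack[OF thread_stack[OF t]] .
  then have "reset_all (board t) (thread_stack t) \<in> s.\<sigma>s (X (Suc t)) (sup (lab t) (C t))"
    unfolding s.arriving_iff using edge[of t] t by auto
  then show ?thesis by (rule s.arriving_subset)
qed

lemma fresh_chip_at_reset: "k0 < t \<Longrightarrow> reset_at t \<Longrightarrow> iota t (X (Suc t)) \<in> set (fresh t)"
proof -
  assume t: "k0 < t" "reset_at t"
  interpret s: greedy_step \<alpha> ch K "\<tau> t" "board t" "board (Suc t)" "fresh t" "iota t" by (rule greedy_step)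
  have "reset_all (board t) (thread_stack t) \<in> s.\<sigma>2 (X t) (lab t)"
    using s.populated_of_stack[OF thread_stack[OF t(1)]] .
  then have "reset_all (board t) (thread_stack t) \<in> s.\<sigma>s (X (Suc t)) \<alpha>"
    unfolding s.arriving_iff using edge[of t] t unfolding reset_at_def by auto
  then show ?thesis by (rule s.iota_fresh)
qed

definition stable_prefix :: "nat \<Rightarrow> 'c set \<Rightarrow> bool" where
  "stable_prefix N P \<longleftrightarrow> (\<forall>t\<ge>N. P \<subseteq> thread_stack t \<and> (\<forall>z\<in>thread_stack t. \<forall>p\<in>P. chip_le (\<Theta> t) z p \<longrightarrow> z \<in> P))"

definition above :: "'c set \<Rightarrow> nat \<Rightarrow> 'c set" where
  "above P t = thread_stack t - P"

definition least_above :: "'c set \<Rightarrow> nat \<Rightarrow> 'c" where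
  "least_above P t = (SOME u. u \<in> above P t \<and> (\<forall>w\<in>above P t. chip_le (\<Theta> t) u w))"

definition lower_chips :: "'c set \<Rightarrow> nat \<Rightarrow> 'c set" where
  "lower_chips P t = {z \<in> set (\<Theta> t). \<forall>w\<in>above P t. chip_le (\<Theta> t) z w}"

lemma stable_prefix_mono: "stable_prefix N P \<Longrightarrow> N \<le> N' \<Longrightarrow> stable_prefix N' P"
  unfolding stable_prefix_def by (meson le_trans)

lemma least_above:
  assumes "k0 < t" "above P t \<noteq> {}"
  shows "least_above P t \<in> above P t" "\<forall>w\<in>above P t. chip_le (\<Theta> t) (least_above P t) w"
proof -
  have sub: "above P t \<subseteq> set (\<Theta> t)" using thread_stack_subset assms(1) unfolding above_def by blast
  obtain u where "u \<in> above P t" "\<forall>w\<in>above P t. chip_le (\<Theta> t) u w"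
    using chip_le_least_exists[OF finite_subset[OF sub] assms(2) sub distinct_control] by blast
  then have "least_above P t \<in> above P t \<and> (\<forall>w\<in>above P t. chip_le (\<Theta> t) (least_above P t) w)"
    unfolding least_above_def by (rule someI[where P="\<lambda>u. u \<in> above P t \<and> (\<forall>w\<in>above P t. chip_le (\<Theta> t) u w)", OF conjI])
  then show "least_above P t \<in> above P t" "\<forall>w\<in>above P t. chip_le (\<Theta> t) (least_above P t) w" by blast+
qed

lemma prefix_below_above:
  assumes "stable_prefix N P" "N \<le> t" "k0 < t" "p \<in> P" "w \<in> above P t"
  shows "chip_le (\<Theta> t) p w"
proof -
  have "p \<in> thread_stack t" "w \<in> thread_stack t" "w \<notin> P"
    using assms unfolding stable_prefix_def above_def by auto
  moreover have "\<not> chip_le (\<Theta> t) w p" using assms(1,2,4) \<open>w \<in> thread_stack t\<close> \<open>w \<notin> P\<close>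
    unfolding stable_prefix_def by blast
  moreover have "p \<in> set (\<Theta> t)" "w \<in> set (\<Theta> t)"
    using thread_stack_subset[OF assms(3)] \<open>p \<in> thread_stack t\<close> \<open>w \<in> thread_stack t\<close> by blast+
  ultimately show ?thesis using chip_le_total[of p "\<Theta> t" w] by blast
qed

lemma prefix_survives_reset:
  assumes pref: "stable_prefix N P" and t: "N \<le> t" "k0 < t" and nocov: "\<forall>p\<in>P. \<not> covered (board t) p"
  shows "P \<subseteq> reset_all (board t) (thread_stack t)"
    and "above P t \<noteq> {} \<Longrightarrow> least_above P t \<in> reset_all (board t) (thread_stack t)"
proof -
  have PT: "P \<subseteq> thread_stack t" using pref t unfolding stable_prefix_def by blast
  have covered_above: "\<epsilon> \<in> above P t" if "\<epsilon> \<in> set (covered_chips (board t))" "\<epsilon> \<in> thread_stack t" for \<epsilon>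
    using that nocov unfolding covered_chips_def covered_def above_def by auto
  show "P \<subseteq> reset_all (board t) (thread_stack t)"
    unfolding reset_all_def
    by (rule truncate_all_keeps[OF PT]) (use covered_above prefix_below_above[OF pref t] in blast)
  assume ne: "above P t \<noteq> {}"
  note u = least_above[OF t(2) ne]
  have "insert (least_above P t) P \<subseteq> thread_stack t" using PT u(1) unfolding above_def by blast
  then have "insert (least_above P t) P \<subseteq> reset_all (board t) (thread_stack t)"
    unfolding reset_all_def
  proof (rule truncate_all_keeps, intro ballI impI)
    fix \<epsilon> c assume "\<epsilon> \<in> set (covered_chips (board t))" "\<epsilon> \<in> thread_stack t" "c \<in> insert (least_above P t) P"
    moreover have "chip_le (\<Theta> t) (least_above P t) \<epsilon>" using u(2) covered_above calculation(1,2) by blast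
    moreover have "chip_le (\<Theta> t) p (least_above P t)" if "p \<in> P" for p
      using prefix_below_above[OF pref t that u(1)] .
    ultimately show "chip_le (\<Theta> t) c \<epsilon>" using chip_le_trans[OF distinct_control] by blast
  qed
  then show "least_above P t \<in> reset_all (board t) (thread_stack t)" by blast
qed

lemma prefix_not_fresh:
  assumes "stable_prefix N P" "N \<le> t" "k0 < t"
  shows "P \<inter> set (fresh t) = {}"
proof -
  interpret s: greedy_step \<alpha> ch K "\<tau> t" "board t" "board (Suc t)" "fresh t" "iota t" by (rule greedy_step)
  have "P \<subseteq> thread_stack t" "P \<subseteq> thread_stack (Suc t)"
    using assms(1,2) unfolding stable_prefix_def by auto
  then have "P \<subseteq> set (\<Theta> t)" "P \<subseteq> set (\<Theta> (Suc t))"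
    using thread_stack_subset[of t] thread_stack_subset[of "Suc t"] assms(3) by auto
  then show ?thesis using s.persistent_chip by blast
qed

lemma above_nonempty_Suc:
  assumes pref: "stable_prefix N P" and t: "N \<le> t" "k0 < t" and nocov: "\<forall>p\<in>P. \<not> covered (board t) p"
    and "above P t \<noteq> {} \<or> reset_at t"
  shows "above P (Suc t) \<noteq> {}"
proof
  have PT': "P \<subseteq> carried_stack t"
    using prefix_survives_reset(1)[OF pref t nocov] unfolding carried_stack_def by auto
  have new: "\<exists>z. z \<in> carried_stack t \<and> z \<notin> P"
  proof (cases "reset_at t")
    case True
    then show ?thesis
      using fresh_chip_at_reset[OF t(2) True] prefix_not_fresh[OF pref t] unfolding carried_stack_def by auto
  next
    case False
    then have "above P t \<noteq> {}" using assms(5) by simp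
    then show ?thesis
      using prefix_survives_reset(2)[OF pref t nocov] least_above(1)[OF t(2)] False
      unfolding carried_stack_def above_def by auto
  qed
  assume "above P (Suc t) = {}"
  moreover have "P \<subseteq> thread_stack (Suc t)" using pref le_SucI[OF t(1)] unfolding stable_prefix_def by blast
  ultimately have "thread_stack (Suc t) = P" unfolding above_def by blast
  then have "stack_less (\<Theta>3 t) P (carried_stack t)" using carried_stack(2)[OF t(2)] new by auto
  then show False using PT' unfolding stack_less_def by blast
qed

lemma least_above_descends:
  assumes pref: "stable_prefix N P" and t: "N \<le> t" "k0 < t" and nocov: "\<forall>p\<in>P. \<not> covered (board t) p"
    and ne: "above P t \<noteq> {}"
  shows "above P (Suc t) \<noteq> {}" and "chip_le (\<Theta>3 t) (least_above P (Suc t)) (least_above P t)"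
proof -
  interpret s: greedy_step \<alpha> ch K "\<tau> t" "board t" "board (Suc t)" "fresh t" "iota t" by (rule greedy_step)
  show ne1: "above P (Suc t) \<noteq> {}" using above_nonempty_Suc[OF pref t nocov] ne by blast
  define u where "u = least_above P t"
  define u1 where "u1 = least_above P (Suc t)"
  have PT': "P \<subseteq> carried_stack t"
    using prefix_survives_reset(1)[OF pref t nocov] unfolding carried_stack_def by auto
  have uT': "u \<in> carried_stack t" "u \<notin> P"
    using prefix_survives_reset(2)[OF pref t nocov ne] least_above(1)[OF t(2) ne]
    unfolding carried_stack_def above_def u_def by auto
  have t1: "k0 < Suc t" using t by simp
  have u1_le: "chip_le (\<Theta>3 t) u1 w" if "w \<in> above P (Suc t)" for w
  proof -
    have "u1 \<in> set (\<Theta> (Suc t))" "w \<in> set (\<Theta> (Suc t))"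
      using least_above(1)[OF t1 ne1] that thread_stack_subset[OF t1] unfolding above_def u1_def by blast+
    moreover have "chip_le (\<Theta> (Suc t)) u1 w" using least_above(2)[OF t1 ne1] that unfolding u1_def by blast
    ultimately show ?thesis using s.chip_le_control' by blast
  qed
  show "chip_le (\<Theta>3 t) u1 u"
  proof (cases "u \<in> thread_stack (Suc t)")
    case True
    then show ?thesis using u1_le uT' unfolding above_def by blast
  next
    case False
    then have "thread_stack (Suc t) \<noteq> carried_stack t" using uT'(1) by blast
    then have "stack_less (\<Theta>3 t) (thread_stack (Suc t)) (carried_stack t)"
      using carried_stack(2)[OF t(2)] by simp
    then obtain d where d: "d \<in> thread_stack (Suc t)" "d \<notin> carried_stack t"
      "\<forall>e \<in> (thread_stack (Suc t) - carried_stack t) \<union> (carried_stack t - thread_stack (Suc t)). chip_le (\<Theta>3 t) d e"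
      unfolding stack_less_def by blast
    have "chip_le (\<Theta>3 t) d u" using d(3) False uT' by blast
    moreover have "d \<in> above P (Suc t)" using d(1,2) PT' unfolding above_def by blast
    ultimately show ?thesis using chip_le_trans[OF s.distinct_successor_control u1_le] by blast
  qed
qed

lemma lower_chips_descend:
  assumes pref: "stable_prefix N P" and t: "N \<le> t" "k0 < t" and nocov: "\<forall>p\<in>P. \<not> covered (board t) p"
    and ne: "above P t \<noteq> {}"
  shows "lower_chips P (Suc t) \<subseteq> lower_chips P t"
proof
  interpret s: greedy_step \<alpha> ch K "\<tau> t" "board t" "board (Suc t)" "fresh t" "iota t" by (rule greedy_step)
  fix z assume z: "z \<in> lower_chips P (Suc t)"
  note ne1 = least_above_descends(1)[OF pref t nocov ne]
  have t1: "k0 < Suc t" using t by simp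
  note u1 = least_above(1)[OF t1 ne1] and u = least_above[OF t(2) ne]
  have "z \<in> set (\<Theta> (Suc t))" "chip_le (\<Theta> (Suc t)) z (least_above P (Suc t))"
    using z u1 unfolding lower_chips_def by blast+
  moreover have "least_above P (Suc t) \<in> set (\<Theta> (Suc t))"
    using u1 thread_stack_subset[OF t1] unfolding above_def by blast
  ultimately have "chip_le (\<Theta>3 t) z (least_above P (Suc t))" using s.chip_le_control' by blast
  then have z3: "chip_le (\<Theta>3 t) z (least_above P t)"
    using chip_le_trans[OF s.distinct_successor_control _ least_above_descends(2)[OF pref t nocov ne]] by blast
  have uo: "least_above P t \<in> set (surviving_chips (\<tau> t) (board t))"
    using prefix_survives_reset(2)[OF pref t nocov ne] reset_thread_stack_surviving[OF t(2)] by blast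
  have zo: "z \<in> set (surviving_chips (\<tau> t) (board t))" using s.surviving_downward[OF z3 uo] .
  have "chip_le (\<Theta> t) z (least_above P t)" using s.chip_le_surviving[OF zo uo] z3 by blast
  moreover have "z \<in> set (\<Theta> t)" using zo s.surviving_subset by blast
  ultimately show "z \<in> lower_chips P t"
    unfolding lower_chips_def using u(2) chip_le_trans[OF distinct_control] by blast
qed

lemma above_eventually_nonempty:
  assumes pref: "stable_prefix N P" and N: "k0 < N" and nocov: "\<forall>t\<ge>N. \<forall>p\<in>P. \<not> covered (board t) p"
  shows "\<exists>N2\<ge>N. \<forall>t\<ge>N2. above P t \<noteq> {}"
proof -
  obtain tc where tc: "N \<le> tc" "reset_at tc" using resets_unbounded[of N] by blast
  have "above P t \<noteq> {}" if "Suc tc \<le> t" for t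
    using that
  proof (induction t rule: dec_induct)
    case base
    then show ?case using above_nonempty_Suc[OF pref tc(1) _ _] tc N nocov by simp
  next
    case (step t)
    then show ?case using above_nonempty_Suc[OF pref _ _ _] tc N nocov by simp
  qed
  then show ?thesis using tc(1) le_SucI by blast
qed

lemma least_above_eventually_const:
  assumes pref: "stable_prefix N P" and N: "k0 < N" and nocov: "\<forall>t\<ge>N. \<forall>p\<in>P. \<not> covered (board t) p"
    and ne: "\<And>t. N \<le> t \<Longrightarrow> above P t \<noteq> {}"
  shows "\<exists>N'\<ge>N. \<forall>t\<ge>N'. least_above P t = least_above P N'"
proof -
  have desc: "lower_chips P (Suc t) \<subseteq> lower_chips P t" if "N \<le> t" for t
    using lower_chips_descend[OF pref that _ _ ne[OF that]] that N nocov by simp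
  have fin: "finite (lower_chips P t)" for t unfolding lower_chips_def by simp
  have "card (lower_chips P (Suc t)) \<le> card (lower_chips P t)" if "N \<le> t" for t
    using card_mono[OF fin desc[OF that]] .
  then obtain N' where N': "N \<le> N'" "\<And>t. N' \<le> t \<Longrightarrow> card (lower_chips P t) = card (lower_chips P N')"
    using antimono_nat_eventually_const[of N "\<lambda>t. card (lower_chips P t)"] by blast
  have stable: "least_above P (Suc t) = least_above P t" if t: "N' \<le> t" for t
  proof -
    interpret s: greedy_step \<alpha> ch K "\<tau> t" "board t" "board (Suc t)" "fresh t" "iota t" by (rule greedy_step)
    have t': "N \<le> t" "k0 < t" "k0 < Suc t" "\<forall>p\<in>P. \<not> covered (board t) p" using t N' N nocov by auto
    have "card (lower_chips P (Suc t)) = card (lower_chips P t)" using N'(2)[of t] N'(2)[of "Suc t"] t by simp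
    then have eq: "lower_chips P (Suc t) = lower_chips P t" using card_seteq[OF fin desc[OF t'(1)]] by simp
    note u = least_above[OF t'(2) ne[OF t'(1)]] and u1 = least_above(1)[OF t'(3) ne[OF le_SucI[OF t'(1)]]]
    have "least_above P t \<in> lower_chips P t"
      using u thread_stack_subset[OF t'(2)] unfolding lower_chips_def above_def by blast
    then have "least_above P t \<in> set (\<Theta> (Suc t))" "chip_le (\<Theta> (Suc t)) (least_above P t) (least_above P (Suc t))"
      using u1 eq unfolding lower_chips_def by blast+
    moreover have "least_above P (Suc t) \<in> set (\<Theta> (Suc t))"
      using u1 thread_stack_subset[OF t'(3)] unfolding above_def by blast
    ultimately have "chip_le (\<Theta>3 t) (least_above P t) (least_above P (Suc t))" using s.chip_le_control' by blast
    then show ?thesis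
      using least_above_descends(2)[OF pref t'(1,2,4) ne[OF t'(1)]] chip_le_antisym[OF s.distinct_successor_control]
      by blast
  qed
  have "least_above P t = least_above P N'" if "N' \<le> t" for t
    using that by (induction t rule: dec_induct) (use stable in auto)
  then show ?thesis using N'(1) by blast
qed

lemma stable_prefix_extend:
  assumes pref: "stable_prefix N P" and N: "k0 < N" and nocov: "\<forall>t\<ge>N. \<forall>p\<in>P. \<not> covered (board t) p"
  obtains N' u where "N \<le> N'" "u \<notin> P" "stable_prefix N' (insert u P)"
proof -
  obtain N2 where N2: "N \<le> N2" "\<And>t. N2 \<le> t \<Longrightarrow> above P t \<noteq> {}"
    using above_eventually_nonempty[OF pref N nocov] by blast
  have "stable_prefix N2 P" "k0 < N2" "\<forall>t\<ge>N2. \<forall>p\<in>P. \<not> covered (board t) p"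
    using stable_prefix_mono[OF pref N2(1)] N N2(1) nocov by auto
  then obtain N3 where N3: "N2 \<le> N3" "\<And>t. N3 \<le> t \<Longrightarrow> least_above P t = least_above P N3"
    using least_above_eventually_const N2(2) by blast
  define u where "u = least_above P N3"
  have u: "u \<in> above P t" "\<forall>w\<in>above P t. chip_le (\<Theta> t) u w" if t: "N3 \<le> t" for t
  proof -
    have "k0 < t" "above P t \<noteq> {}" using N N2 N3(1) t by auto
    then show "u \<in> above P t" "\<forall>w\<in>above P t. chip_le (\<Theta> t) u w"
      using least_above[of t P] N3(2)[OF t] unfolding u_def by auto
  qed
  have "stable_prefix N3 (insert u P)"
    unfolding stable_prefix_def
  proof (intro allI impI conjI ballI)
    fix t assume t: "N3 \<le> t"
    have "N \<le> t" using t N2(1) N3(1) by simp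
    then have P: "P \<subseteq> thread_stack t" "\<forall>z\<in>thread_stack t. \<forall>p\<in>P. chip_le (\<Theta> t) z p \<longrightarrow> z \<in> P"
      using pref unfolding stable_prefix_def by blast+
    then show "insert u P \<subseteq> thread_stack t" using u(1)[OF t] unfolding above_def by blast
    fix z p assume z: "z \<in> thread_stack t" and p: "p \<in> insert u P" and zp: "chip_le (\<Theta> t) z p"
    show "z \<in> insert u P"
    proof (cases "p = u \<and> z \<notin> P")
      case True
      then have "chip_le (\<Theta> t) u z" using u(2)[OF t] z unfolding above_def by blast
      then have "z = u" using True zp chip_le_antisym[OF distinct_control, of t z u] by simp
      then show ?thesis by simp
    next
      case False
      then show ?thesis using P(2) z p zp by auto
    qed
  qed
  moreover have "u \<notin> P" using u(1)[of N3] unfolding above_def by blast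
  moreover have "N \<le> N3" using N2(1) N3(1) by simp
  ultimately show thesis using that by blast
qed

lemma stable_prefixes_grow:
  assumes no_accepting: "\<forall>\<gamma>\<in>Kbar ch K (card (UNIV :: 'a set)).
    \<not> (infinite {n. covered (board n) \<gamma>} \<and> finite {n. \<gamma> \<notin> set (\<Theta> n)})"
  shows "\<exists>N P. k0 < N \<and> stable_prefix N P \<and> finite P \<and> card P = j"
proof (induction j)
  case 0
  have "stable_prefix (Suc k0) {}" unfolding stable_prefix_def by simp
  then show ?case by (intro exI[of _ "Suc k0"] exI[of _ "{}"]) simp
next
  case (Suc j)
  then obtain N P where NP: "k0 < N" "stable_prefix N P" "finite P" "card P = j" by blast
  have persistent: "p \<in> set (\<Theta> t)" if p: "p \<in> P" and t: "N \<le> t" for p t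
  proof -
    have "P \<subseteq> thread_stack t" using NP(2) t unfolding stable_prefix_def by blast
    moreover have "k0 < t" using NP(1) t by simp
    ultimately show ?thesis using thread_stack_subset[of t] p by blast
  qed
  have "finite {n. covered (board n) p}" if p: "p \<in> P" for p
  proof -
    have "{n. p \<notin> set (\<Theta> n)} \<subseteq> {..<N}" using persistent[OF p] by (auto simp: not_less[symmetric])
    then have "finite {n. p \<notin> set (\<Theta> n)}" using finite_subset by blast
    moreover have "p \<in> Kbar ch K (card (UNIV :: 'a set))"
      using persistent[OF p, of N] sparse[of N] unfolding ksparse_def by auto
    ultimately show ?thesis using no_accepting by blast
  qed
  then have "finite (\<Union>p\<in>P. {n. covered (board n) p})" using NP(3) by blast
  then obtain B where B: "\<forall>n\<in>(\<Union>p\<in>P. {n. covered (board n) p}). n < B"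
    using finite_nat_set_iff_bounded by blast
  have "\<forall>t\<ge>max N B. \<forall>p\<in>P. \<not> covered (board t) p" using B by (meson UN_I leD max.boundedE mem_Collect_eq)
  moreover have "stable_prefix (max N B) P" by (rule stable_prefix_mono[OF NP(2)]) simp
  moreover have "k0 < max N B" using NP(1) by simp
  ultimately obtain N' u where "max N B \<le> N'" "u \<notin> P" "stable_prefix N' (insert u P)"
    using stable_prefix_extend by blast
  moreover have "k0 < N'" using NP(1) calculation(1) by simp
  ultimately show ?case using NP(3,4) by (intro exI[of _ N'] exI[of _ "insert u P"]) simp
qed

lemma accepting_chip:
  "\<exists>\<gamma>\<in>Kbar ch K (card (UNIV :: 'a set)). infinite {n. covered (board n) \<gamma>} \<and> finite {n. \<gamma> \<notin> set (\<Theta> n)}"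
proof (rule ccontr)
  assume "\<not> ?thesis"
  then obtain N P where NP: "k0 < N" "stable_prefix N P" "card P = Suc (K * card (UNIV :: 'a set))"
    using stable_prefixes_grow by blast
  have "P \<subseteq> set (\<Theta> N)" using NP(1,2) thread_stack_subset unfolding stable_prefix_def by blast
  then have "card P \<le> length (\<Theta> N)" using card_mono[of "set (\<Theta> N)" P] card_length[of "\<Theta> N"] by simp
  also have "\<dots> \<le> K * card (UNIV :: 'a set)" using sparse[of N] unfolding ksparse_def by simp
  finally show False using NP(3) by simp
qed

end

context safra_path
begin

lemma accepting_if_trace_cond:
  assumes "trace_cond \<alpha> \<tau>"
  shows "\<exists>\<gamma>\<in>Kbar ch K (card (UNIV :: 'a set)). infinite {n. covered (board n) \<gamma>} \<and> finite {n. \<gamma> \<notin> set (\<Theta> n)}"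
proof -
  obtain k0 X C lab where "alpha_thread \<alpha> \<tau> k0 X C lab" "X k0 \<in> mdom (\<tau> k0)" "lab k0 = bot"
    using alpha_thread_if_trace_cond[OF alpha assms] by blast
  then interpret safra_thread \<alpha> Ob S M ch g \<tau> k0 X C lab by unfold_locales
  show ?thesis by (rule accepting_chip)
qed

end

lemma run_domains_iff:
  "(\<forall>n. mdom (\<tau> n) = fst (safra_run S g \<tau> n)) \<longleftrightarrow> mdom (\<tau> 0) = S \<and> is_path \<tau>"
proof
  assume h: "\<forall>n. mdom (\<tau> n) = fst (safra_run S g \<tau> n)"
  have "mdom (\<tau> 0) = S" using h[rule_format, of 0] by simp
  moreover have "is_path \<tau>" unfolding is_path_def using h by simp
  ultimately show "mdom (\<tau> 0) = S \<and> is_path \<tau>" ..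
next
  assume h: "mdom (\<tau> 0) = S \<and> is_path \<tau>"
  show "\<forall>n. mdom (\<tau> n) = fst (safra_run S g \<tau> n)"
  proof
    fix n show "mdom (\<tau> n) = fst (safra_run S g \<tau> n)"
      using h unfolding is_path_def by (cases n) simp_all
  qed
qed

theorem mainTheorem6:
  fixes \<alpha> :: "'a::{finite,bounded_semilattice_sup_bot}"
    and Ob :: "'x set set" and S :: "'x set"
    and M :: "('x,'a) morph set"
    and ch :: "nat \<Rightarrow> 'c::countable"
    and g :: "('x,'a) morph \<Rightarrow> ('c,'x,'a) board \<Rightarrow> ('c,'x,'a) board"
    and \<tau> :: "nat \<Rightarrow> ('x,'a) morph"
  assumes "\<alpha> \<noteq> bot"
    and "finite Ob" and "\<forall>X\<in>Ob. finite X" and "S \<in> Ob"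
    and "\<forall>m\<in>M. is_morph m \<and> mdom m \<in> Ob \<and> mcod m \<in> Ob"
    and "inj ch"
    and "safra_choice \<alpha> ch Ob M g"
    and "\<forall>n. \<tau> n \<in> M"
  shows "safra_accepts \<alpha> ch Ob S g \<tau> \<longleftrightarrow>
           mdom (\<tau> 0) = S \<and> is_path \<tau> \<and> trace_cond \<alpha> \<tau>"
proof -
  have path: "safra_path \<alpha> Ob S M ch g \<tau>" if "\<forall>n. mdom (\<tau> n) = fst (safra_run S g \<tau> n)"
    using assms that by unfold_locales auto
  show ?thesis
  proof
    assume acc: "safra_accepts \<alpha> ch Ob S g \<tau>"
    then have run_dom: "\<forall>n. mdom (\<tau> n) = fst (safra_run S g \<tau> n)" unfolding safra_accepts_def by blast
    interpret safra_path \<alpha> Ob S M ch g \<tau> using path[OF run_dom] .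
    obtain \<gamma> where "infinite {n. covered (board n) \<gamma>}" "finite {n. \<gamma> \<notin> set (\<Theta> n)}"
      using acc unfolding safra_accepts_def board_def by blast
    then have "trace_cond \<alpha> \<tau>" by (rule trace_cond_if_accepting)
    then show "mdom (\<tau> 0) = S \<and> is_path \<tau> \<and> trace_cond \<alpha> \<tau>" using run_dom unfolding run_domains_iff by blast
  next
    assume path_trace: "mdom (\<tau> 0) = S \<and> is_path \<tau> \<and> trace_cond \<alpha> \<tau>"
    then have run_dom: "\<forall>n. mdom (\<tau> n) = fst (safra_run S g \<tau> n)" unfolding run_domains_iff by blast
    interpret safra_path \<alpha> Ob S M ch g \<tau> using path[OF run_dom] .
    obtain \<gamma> where "\<gamma> \<in> Kbar ch K (card (UNIV :: 'a set))" "infinite {n. covered (board n) \<gamma>}"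
      "finite {n. \<gamma> \<notin> set (\<Theta> n)}"
      using accepting_if_trace_cond path_trace by blast
    then show "safra_accepts \<alpha> ch Ob S g \<tau>" using run_dom unfolding safra_accepts_def board_def by blast
  qed
qed

end
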